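(* Let $\xi\mapsto H_\xi$ be a differentiable family of $d\times d$ Hermitian matrices with non-degenerate spectrum, fix a time $t$, let $U_t=\exp(-itH_\xi)$, $\mathfrak g_{U,\xi}=i(\partial_\xi U_t)U_t^\dagger$ and $\mathfrak g_{S,\xi}=i(\partial_\xi S_\xi)S_\xi^\dagger$. Suppose that at the given $\xi$ there exist a normalized eigenvector $v_1$ of $\mathfrak g_{S,\xi}$ for its largest eigenvalue and a normalized eigenvector $v_d$ of $\mathfrak g_{S,\xi}$ for its smallest eigenvalue that are equioriented with respect to the computational basis, i.e. $|\langle j|v_1\rangle|=|\langle j|v_d\rangle|$ for all $j=0,\dots,d-1$. Then $$\mathcal G_\xi=\big(\sigma[\mathfrak g_{U,\xi}]+\sigma[\mathfrak g_{S,\xi}]\big)^2.$$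
   Context: For a Hermitian matrix $M$ with eigenvalues $\lambda_1(M)\ge\dots\ge\lambda_d(M)$, the spectral gap is $\sigma(M):=\lambda_1(M)-\lambda_d(M)$. Let $\{|0\rangle,\dots,|d-1\rangle\}$ be the computational basis of $\mathbb C^d$. Let $E_{j,\xi}:=\lambda_{d-j}(H_\xi)$ ($j=0,\dots,d-1$) be the eigenvalues of $H_\xi$ with normalized eigenvectors $|E_{j,\xi}\rangle$, chosen to depend differentiably on $\xi$, and $P_{E_{j,\xi}}=|E_{j,\xi}\rangle\langle E_{j,\xi}|$. Let $S_\xi$ be the unitary with $S_\xi|E_{j,\xi}\rangle=|j\rangle$ for all $j$. For a density matrix $\rho_0$, set $\rho_\xi=U_t\rho_0U_t^\dagger$. For a unitary $V$ (independent of $\xi$), the controlled energy measurement $\mathscr M_{V,\xi}$ is the POVM $\{V^\dagger P_{E_{j,\xi}}V\}_{j}$, with outcome probabilities $p_{j,\xi}=\mathrm{tr}[\rho_\xi V^\dagger P_{E_{j,\xi}}V]$ and Fisher information $\mathcal F_\xi(\rho_0,\mathscr M_{V,\xi})=\sum_j p_{j,\xi}(\partial_\xi\ln p_{j,\xi})^2$ (sum over $j$ with $p_{j,\xi}>0$). Define $\mathcal G_\xi=\max_{\rho_0}\max_{V\in U(d)}\mathcal F_\xi(\rho_0,\mathscr M_{V,\xi})$, maximum over density matrices $\rho_0$ and unitaries $V$. *)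

theory Defs
  imports "HOL-Analysis.Analysis"
begin

text \<open>Square complex matrices of size d = CARD('n), indices in a finite linearly ordered type 'n.
  Entry (row i, column j) of M is M $ i $ j; the computational basis vector |j> is axis j 1.\<close>

type_synonym 'n cmat = "complex ^ 'n ^ 'n"
type_synonym 'n cvec = "complex ^ 'n"

definition adj :: "'n::finite cmat \<Rightarrow> 'n cmat" where
  "adj M = (\<chi> i j. cnj (M $ j $ i))"

definition hermitian :: "'n::finite cmat \<Rightarrow> bool" where
  "hermitian M \<longleftrightarrow> adj M = M"

definition unitary :: "'n::finite cmat \<Rightarrow> bool" where
  "unitary U \<longleftrightarrow> adj U ** U = mat 1 \<and> U ** adj U = mat 1"

definition cinner :: "'n::finite cvec \<Rightarrow> 'n cvec \<Rightarrow> complex" where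
  "cinner u v = (\<Sum>i\<in>UNIV. cnj (u $ i) * v $ i)"

definition normalized :: "'n::finite cvec \<Rightarrow> bool" where
  "normalized v \<longleftrightarrow> cinner v v = 1"

definition outer :: "'n::finite cvec \<Rightarrow> 'n cvec \<Rightarrow> 'n cmat" where
  "outer u v = (\<chi> i j. u $ i * cnj (v $ j))"

definition mtrace :: "'n::finite cmat \<Rightarrow> complex" where
  "mtrace M = (\<Sum>i\<in>UNIV. M $ i $ i)"

definition cscale :: "complex \<Rightarrow> 'n::finite cmat \<Rightarrow> 'n cmat" where
  "cscale c M = (\<chi> i j. c * M $ i $ j)"

definition density_matrix :: "'n::finite cmat \<Rightarrow> bool" where
  "density_matrix \<rho> \<longleftrightarrow> hermitian \<rho> \<and> (\<forall>v. 0 \<le> Re (cinner v (\<rho> *v v))) \<and> mtrace \<rho> = 1"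

definition eigvals :: "'n::finite cmat \<Rightarrow> complex set" where
  "eigvals M = {c. \<exists>v. v \<noteq> 0 \<and> M *v v = c *s v}"

text \<open>Largest / smallest eigenvalue and spectral gap (meant for Hermitian matrices, whose
  eigenvalues are real).\<close>
definition lambda_max :: "'n::finite cmat \<Rightarrow> real" where
  "lambda_max M = Max (Re ` eigvals M)"

definition lambda_min :: "'n::finite cmat \<Rightarrow> real" where
  "lambda_min M = Min (Re ` eigvals M)"

definition spectral_gap :: "'n::finite cmat \<Rightarrow> real" where
  "spectral_gap M = lambda_max M - lambda_min M"

fun mpow :: "'n::finite cmat \<Rightarrow> nat \<Rightarrow> 'n cmat" where
  "mpow A 0 = mat 1"
| "mpow A (Suc k) = A ** mpow A k"

definition mexp :: "'n::finite cmat \<Rightarrow> 'n cmat" where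
  "mexp A = (\<Sum>k. (inverse (fact k)) *\<^sub>R mpow A k)"

definition evol :: "real \<Rightarrow> (real \<Rightarrow> 'n::finite cmat) \<Rightarrow> real \<Rightarrow> 'n cmat" where
  "evol t H x = mexp (cscale (- \<i> * complex_of_real t) (H x))"

definition gen :: "(real \<Rightarrow> 'n::finite cmat) \<Rightarrow> real \<Rightarrow> 'n cmat" where
  "gen F x = cscale \<i> (vector_derivative F (at x) ** adj (F x))"

text \<open>Outcome probabilities of the controlled energy measurement
  {V^dagger P_{E_j,xi} V}_j on rho_xi = U rho0 U^dagger, as functions of xi.\<close>
definition outcome_prob ::
  "(real \<Rightarrow> 'n::finite cmat) \<Rightarrow> (real \<Rightarrow> 'n \<Rightarrow> 'n cvec) \<Rightarrow> 'n cmat \<Rightarrow> 'n cmat \<Rightarrow> 'n \<Rightarrow> real \<Rightarrow> real"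
  where
  "outcome_prob U Ev \<rho>0 V j x =
     Re (mtrace ((U x ** \<rho>0 ** adj (U x)) ** (adj V ** outer (Ev x j) (Ev x j) ** V)))"

definition fisher_info ::
  "(real \<Rightarrow> 'n::finite cmat) \<Rightarrow> (real \<Rightarrow> 'n \<Rightarrow> 'n cvec) \<Rightarrow> 'n cmat \<Rightarrow> 'n cmat \<Rightarrow> real \<Rightarrow> real"
  where
  "fisher_info U Ev \<rho>0 V \<xi> =
     (\<Sum>j\<in>{j. 0 < outcome_prob U Ev \<rho>0 V j \<xi>}.
        outcome_prob U Ev \<rho>0 V j \<xi> * (deriv (\<lambda>x. ln (outcome_prob U Ev \<rho>0 V j x)) \<xi>)\<^sup>2)"

text \<open>The set of all achievable Fisher informations; G_xi is its maximum.\<close>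
definition fisher_set ::
  "(real \<Rightarrow> 'n::finite cmat) \<Rightarrow> (real \<Rightarrow> 'n \<Rightarrow> 'n cvec) \<Rightarrow> real \<Rightarrow> real set" where
  "fisher_set U Ev \<xi> =
     {fisher_info U Ev \<rho>0 V \<xi> | \<rho>0 V. density_matrix \<rho>0 \<and> unitary V}"

definition is_max_of :: "real set \<Rightarrow> real \<Rightarrow> bool" where
  "is_max_of A m \<longleftrightarrow> m \<in> A \<and> (\<forall>x\<in>A. x \<le> m)"

end

theory Submission
  imports Defs
begin

text \<open>Write \<open>W = S V U\<close>, so that the outcome probabilities are the diagonal entries of
  \<open>\<rho> = W \<rho>0 W\<^sup>\<dagger>\<close> and their derivatives are the diagonal entries of \<open>-i[G, \<rho>]\<close> with
  \<open>G = g\<^sub>S + (S V) g\<^sub>U (S V)\<^sup>\<dagger>\<close>.  For the upper bound, replace \<open>G\<close> by \<open>K = G - c\<close> with \<open>c\<close> the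
  midpoint of its spectrum: Cauchy--Schwarz for the positive form \<open>\<rho>\<close> bounds each Fisher term by
  \<open>4 (K \<rho> K)\<^sub>j\<^sub>j\<close>, and \<open>tr (K \<rho> K) \<le> (\<sigma>(G)/2)\<^sup>2\<close>; finally the spectral gap is subadditive and
  unitarily invariant.  For attainment, choose \<open>V\<close> mapping extremal eigenvectors \<open>c, d\<close> of \<open>g\<^sub>U\<close>
  to \<open>S\<^sup>\<dagger> a, S\<^sup>\<dagger> b\<close>, where \<open>a, b\<close> are the equioriented extremal eigenvectors of \<open>g\<^sub>S\<close>; then
  \<open>a, b\<close> are extremal eigenvectors of \<open>G\<close>, and the state \<open>(a + \<omega> b)/\<surd>2\<close> with a generic phase
  \<open>\<omega>\<close> makes every Cauchy--Schwarz step an equality.\<close>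

section \<open>Adjoints, inner products and unitary matrices\<close>

lemma adj_nth [simp]: "adj A $ i $ j = cnj (A $ j $ i)"
  by (simp add: adj_def)

lemma adj_adj [simp]: "adj (adj A) = A"
  by (simp add: vec_eq_iff)

lemma adj_mat1 [simp]: "adj (mat 1 :: 'n::finite cmat) = mat 1"
  by (simp add: vec_eq_iff mat_def)

lemma adj_zero [simp]: "adj 0 = 0"
  by (simp add: vec_eq_iff)

lemma adj_mult: "adj (A ** B) = adj B ** adj A"
  by (simp add: vec_eq_iff matrix_matrix_mult_def mult.commute)

lemma adj_add: "adj (A + B) = adj A + adj B"
  by (simp add: vec_eq_iff)

lemma adj_diff: "adj (A - B) = adj A - adj B"
  by (simp add: vec_eq_iff)

lemma adj_scaleR: "adj (r *\<^sub>R A) = r *\<^sub>R adj A"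
  by (simp add: vec_eq_iff)

lemma cscale_nth [simp]: "cscale c M $ i $ j = c * M $ i $ j"
  by (simp add: cscale_def)

lemma adj_cscale: "adj (cscale c A) = cscale (cnj c) (adj A)"
  by (simp add: vec_eq_iff)

lemma cscale_mult_left: "cscale c A ** B = cscale c (A ** B)"
  by (simp add: vec_eq_iff matrix_matrix_mult_def sum_distrib_left mult_ac)

lemma cscale_mult_right: "A ** cscale c B = cscale c (A ** B)"
  by (simp add: vec_eq_iff matrix_matrix_mult_def sum_distrib_left mult_ac)

lemma cscale_cscale: "cscale c (cscale d A) = cscale (c * d) A"
  by (simp add: vec_eq_iff mult_ac)

lemma cscale_one [simp]: "cscale 1 A = A"
  by (simp add: vec_eq_iff)

lemma cscale_add: "cscale c (A + B) = cscale c A + cscale c B"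
  by (simp add: vec_eq_iff distrib_left)

lemma cscale_matrix_vector_mult: "cscale c A *v v = c *s (A *v v)"
  by (simp add: vec_eq_iff matrix_vector_mult_def sum_distrib_left mult_ac)

lemma scaleR_vec_nth: "(r *\<^sub>R (v::'n::finite cvec)) $ i = complex_of_real r * v $ i"
  by (metis vector_scaleR_component scaleR_conv_of_real)

lemma scaleR_mat_nth: "(r *\<^sub>R (M::'n::finite cmat)) $ i $ j = complex_of_real r * M $ i $ j"
  by (metis vector_scaleR_component scaleR_conv_of_real)

lemma of_real_smult_eq_scaleR: "complex_of_real r *s (v::'n::finite cvec) = r *\<^sub>R v"
  by (metis scaleR_vec_nth vec_eq_iff vector_smult_component)

lemma scaleR_eq_cscale: "r *\<^sub>R M = cscale (complex_of_real r) (M :: 'n::finite cmat)"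
  by (simp only: vec_eq_iff scaleR_mat_nth cscale_nth) simp

lemma matrix_add_rdistrib: "(A + B) ** C = A ** C + B ** (C :: 'n::finite cmat)"
  by (simp add: vec_eq_iff matrix_matrix_mult_def distrib_right sum.distrib)

lemma matrix_diff_rdistrib: "(A - B) ** C = A ** C - B ** (C :: 'n::finite cmat)"
  by (simp add: vec_eq_iff matrix_matrix_mult_def left_diff_distrib sum_subtractf)

lemma matrix_diff_ldistrib: "A ** (B - C) = A ** B - A ** (C :: 'n::finite cmat)"
  by (simp add: vec_eq_iff matrix_matrix_mult_def right_diff_distrib sum_subtractf)

lemma matrix_sum_ldistrib: "A ** (\<Sum>k\<in>K. M k) = (\<Sum>k\<in>K. A ** (M k :: 'n::finite cmat))"
  by (induct K rule: infinite_finite_induct) (auto simp: matrix_add_ldistrib)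

lemma matrix_vector_mult_smult: "A *v (c *s v) = c *s (A *v (v::'n::finite cvec))"
  by (simp add: vec_eq_iff matrix_vector_mult_def sum_distrib_left mult_ac)

lemma matrix_vector_sum_distrib: "A *v (\<Sum>k\<in>K. f k) = (\<Sum>k\<in>K. A *v (f k :: 'n::finite cvec))"
  by (induct K rule: infinite_finite_induct) (auto simp: matrix_vector_right_distrib)

lemma sum_matrix_vector_mult: "(\<Sum>k\<in>K. M k) *v x = (\<Sum>k\<in>K. M k *v (x::'n::finite cvec))"
  by (induct K rule: infinite_finite_induct) (auto simp: matrix_vector_mult_add_rdistrib)

lemma matrix_vector_mult_axis: "M *v axis j 1 = (\<chi> i. M $ i $ j)"
  by (simp add: vec_eq_iff matrix_vector_mult_def axis_def if_distrib cong: if_cong)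

lemma mat_eq_by_columns: "(\<And>j. M *v axis j 1 = N *v axis j 1) \<Longrightarrow> M = (N :: 'n::finite cmat)"
proof -
  assume a: "\<And>j. M *v axis j 1 = N *v axis j 1"
  have "M $ i $ j = N $ i $ j" for i j
    using arg_cong[OF a[of j], of "\<lambda>v. v $ i"] by (simp add: matrix_vector_mult_axis)
  then show ?thesis by (simp add: vec_eq_iff)
qed

lemma cinner_adj: "cinner u (A *v v) = cinner (adj A *v u) v"
proof -
  have "cinner u (A *v v) = (\<Sum>i\<in>UNIV. \<Sum>j\<in>UNIV. cnj (u$i) * A$i$j * v$j)"
    by (simp add: cinner_def matrix_vector_mult_def sum_distrib_left mult_ac)
  also have "\<dots> = (\<Sum>j\<in>UNIV. \<Sum>i\<in>UNIV. cnj (u$i) * A$i$j * v$j)"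
    by (rule sum.swap)
  also have "\<dots> = cinner (adj A *v u) v"
    by (simp add: cinner_def adj_def matrix_vector_mult_def sum_distrib_right sum_distrib_left mult_ac)
  finally show ?thesis .
qed

lemma cinner_zero_right [simp]: "cinner u 0 = 0"
  by (simp add: cinner_def)

lemma cinner_add_right: "cinner u (v + w) = cinner u v + cinner u w"
  by (simp add: cinner_def distrib_left sum.distrib)

lemma cinner_add_left: "cinner (u + v) w = cinner u w + cinner v w"
  by (simp add: cinner_def distrib_right sum.distrib)

lemma cinner_diff_right: "cinner u (v - w) = cinner u v - cinner u w"
  by (simp add: cinner_def right_diff_distrib sum_subtractf)

lemma cinner_diff_left: "cinner (u - v) w = cinner u w - cinner v w"
  by (simp add: cinner_def left_diff_distrib sum_subtractf)

lemma cinner_scale_right: "cinner u (c *s v) = c * cinner u v"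
  by (simp add: cinner_def sum_distrib_left mult_ac)

lemma cinner_scale_left: "cinner (c *s u) v = cnj c * cinner u v"
  by (simp add: cinner_def sum_distrib_left mult_ac)

lemma cinner_cnj: "cnj (cinner u v) = cinner v u"
  by (simp add: cinner_def mult.commute)

lemma cinner_sum_right: "cinner u (\<Sum>k\<in>K. f k) = (\<Sum>k\<in>K. cinner u (f k))"
  unfolding cinner_def by (simp add: sum_component sum_distrib_left) (rule sum.swap)

lemma cinner_axis_left: "cinner (axis j 1) v = v $ j"
proof -
  have "cinner (axis j 1) v = (\<Sum>i\<in>UNIV. if i = j then v $ i else 0)"
    unfolding cinner_def by (rule sum.cong) (auto simp: axis_def)
  then show ?thesis by simp
qed

lemma cnj_mult_self: "cnj z * z = complex_of_real ((cmod z)\<^sup>2)"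
  by (metis complex_norm_square mult.commute)

lemma mult_cnj_self: "z * cnj z = complex_of_real ((cmod z)\<^sup>2)"
  by (metis complex_norm_square)

lemma cinner_self: "cinner v v = complex_of_real (\<Sum>i\<in>UNIV. (cmod (v $ i))\<^sup>2)"
  unfolding cinner_def of_real_sum
  by (rule sum.cong) (auto simp: complex_norm_square mult.commute simp flip: of_real_power)

lemma cinner_self_Re: "Re (cinner v v) = (\<Sum>i\<in>UNIV. (cmod (v $ i))\<^sup>2)"
  by (simp add: cinner_self)

lemma cinner_self_eq_0: "cinner v v = 0 \<longleftrightarrow> v = 0"
proof
  assume "cinner v v = 0"
  then have "(\<Sum>i\<in>UNIV. (cmod (v $ i))\<^sup>2) = 0"
    using cinner_self[of v] by (metis of_real_eq_0_iff)
  then have "\<forall>i\<in>UNIV. (cmod (v $ i))\<^sup>2 = 0"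
    by (subst (asm) sum_nonneg_eq_0_iff) auto
  then show "v = 0" by (simp add: vec_eq_iff)
qed (simp add: cinner_def)

lemma cinner_self_norm: "cinner v v = complex_of_real ((norm v)\<^sup>2)"
  by (simp add: cinner_self norm_vec_def L2_set_def sum_nonneg)

lemma normalized_iff_norm: "normalized v \<longleftrightarrow> norm v = 1"
  unfolding normalized_def cinner_self_norm
  by (metis norm_ge_zero of_real_1 of_real_eq_iff power_one abs_norm_cancel real_sqrt_abs
      real_sqrt_one power2_eq_1_iff)

lemma cinner_scale_form: "cinner (c *s x) (A *v (c *s x)) = complex_of_real ((cmod c)\<^sup>2) * cinner x (A *v x)"
proof -
  have "cinner (c *s x) (A *v (c *s x)) = (cnj c * c) * cinner x (A *v x)"
    by (simp add: matrix_vector_mult_smult cinner_scale_left cinner_scale_right mult.assoc)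
  then show ?thesis by (simp only: cnj_mult_self)
qed

lemma hermitian_cinner_swap: "hermitian A \<Longrightarrow> cinner (A *v u) v = cinner u (A *v v)"
  by (simp add: cinner_adj hermitian_def)

lemma hermitian_form_Im: "hermitian A \<Longrightarrow> Im (cinner v (A *v v)) = 0"
  by (metis cinner_cnj cnj.simps(2) hermitian_cinner_swap neg_equal_zero)

lemma hermitian_add: "hermitian A \<Longrightarrow> hermitian B \<Longrightarrow> hermitian (A + B)"
  by (simp add: hermitian_def adj_add)

lemma hermitian_unitary_conj: "hermitian A \<Longrightarrow> hermitian (W ** A ** adj W)"
  by (simp add: hermitian_def adj_mult matrix_mul_assoc)

lemma hermitian_sub_scalar: "hermitian A \<Longrightarrow> hermitian (A - cscale (complex_of_real c) (mat 1))"
  by (simp add: hermitian_def adj_diff adj_cscale)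

lemma unitary_adj: "unitary U \<Longrightarrow> unitary (adj U)"
  by (simp add: unitary_def)

lemma unitary_mult: "unitary U \<Longrightarrow> unitary V \<Longrightarrow> unitary (U ** V)"
  unfolding unitary_def adj_mult
  by (metis matrix_mul_assoc matrix_mul_lid)

lemma unitary_cinner: "unitary U \<Longrightarrow> cinner (U *v u) (U *v v) = cinner u v"
  by (simp add: cinner_adj unitary_def matrix_vector_mul_assoc)

lemma unitary_adj_mvec: "unitary U \<Longrightarrow> adj U *v (U *v v) = v"
  by (simp add: matrix_vector_mul_assoc unitary_def)

lemma unitary_mvec_adj: "unitary U \<Longrightarrow> U *v (adj U *v v) = v"
  by (simp add: matrix_vector_mul_assoc unitary_def)

lemma unitary_conj_mult:
  "unitary W \<Longrightarrow> (adj W ** A ** W) ** (adj W ** B ** W) = adj W ** (A ** B) ** W"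
  by (simp add: matrix_mul_assoc unitary_def) (simp flip: matrix_mul_assoc)

section \<open>The spectral theorem\<close>

lemma hermitian_form_add_scaled:
  assumes "hermitian B"
  shows "Re (cinner (a + s *s b) (B *v (a + s *s b))) =
     Re (cinner a (B *v a)) + 2 * Re (s * cinner a (B *v b)) + (cmod s)\<^sup>2 * Re (cinner b (B *v b))"
proof -
  have ba: "cinner b (B *v a) = cnj (cinner a (B *v b))"
    using assms by (metis cinner_cnj hermitian_cinner_swap)
  have "cinner (a + s *s b) (B *v (a + s *s b)) =
     cinner a (B *v a) + s * cinner a (B *v b) + cnj s * cinner b (B *v a) + cnj s * s * cinner b (B *v b)"
    by (simp add: matrix_vector_right_distrib matrix_vector_mult_smult cinner_add_left cinner_add_right
        cinner_scale_left cinner_scale_right algebra_simps)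
  also have "\<dots> = cinner a (B *v a) + s * cinner a (B *v b) + cnj (s * cinner a (B *v b))
      + complex_of_real ((cmod s)\<^sup>2) * cinner b (B *v b)"
    by (simp add: ba cnj_mult_self)
  finally show ?thesis using hermitian_form_Im[OF assms, of b] by simp
qed

lemma complex_quadratic_nonneg_imp_le:
  fixes \<alpha> \<beta> :: real and z :: complex
  assumes q: "\<And>s. 0 \<le> \<alpha> + 2 * Re (s * z) + (cmod s)\<^sup>2 * \<beta>" and \<beta>: "0 \<le> \<beta>"
  shows "(cmod z)\<^sup>2 \<le> \<alpha> * \<beta>"
proof -
  have zz: "cnj z * z = complex_of_real ((cmod z)\<^sup>2)"
    by (rule cnj_mult_self)
  have a0: "0 \<le> \<alpha>" using q[of 0] by simp
  show ?thesis
  proof (cases "\<beta> > 0")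
    case True
    text \<open>Minimise over \<open>s\<close>: the minimum is attained at \<open>s = - cnj z / \<beta>\<close>.\<close>
    define s where "s = - cnj z / complex_of_real \<beta>"
    have "s * z = - (cnj z * z) / complex_of_real \<beta>" by (simp add: s_def)
    also have "\<dots> = complex_of_real (- (cmod z)\<^sup>2 / \<beta>)" by (simp only: zz) simp
    finally have e1: "Re (s * z) = - (cmod z)\<^sup>2 / \<beta>" by simp
    have e2: "(cmod s)\<^sup>2 = (cmod z)\<^sup>2 / \<beta>\<^sup>2"
      using True by (simp add: s_def norm_divide power_divide)
    have "0 \<le> \<alpha> + 2 * (- (cmod z)\<^sup>2 / \<beta>) + (cmod z)\<^sup>2 / \<beta>\<^sup>2 * \<beta>"
      using q[of s] unfolding e1 e2 .
    also have "\<dots> = \<alpha> - (cmod z)\<^sup>2 / \<beta>"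
      using True by (simp add: power2_eq_square field_simps)
    finally show ?thesis using True by (simp add: field_simps)
  next
    case False
    text \<open>Now the linear term must vanish, since otherwise a suitable \<open>s\<close> makes the quadratic
      negative.\<close>
    have "z = 0"
    proof (rule ccontr)
      assume "z \<noteq> 0"
      then have pos: "(cmod z)\<^sup>2 > 0" by simp
      define s where "s = - complex_of_real ((\<alpha> + 1) / (cmod z)\<^sup>2) * cnj z"
      have "s * z = - complex_of_real ((\<alpha> + 1) / (cmod z)\<^sup>2) * (cnj z * z)"
        by (simp add: s_def mult.assoc)
      also have "\<dots> = complex_of_real (- (\<alpha> + 1))"
        using pos by (simp only: zz) (simp add: field_simps)
      finally have "Re (s * z) = - (\<alpha> + 1)" by simp
      then show False using q[of s] False \<beta> a0 by simp
    qed
    then show ?thesis using a0 \<beta> by simp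
  qed
qed

lemma hermitian_form_cauchy_schwarz:
  assumes herm: "hermitian B" and C: "vec.subspace C" and aC: "a \<in> C" and bC: "b \<in> C"
    and psd: "\<And>x. x \<in> C \<Longrightarrow> 0 \<le> Re (cinner x (B *v x))"
  shows "(cmod (cinner a (B *v b)))\<^sup>2 \<le> Re (cinner a (B *v a)) * Re (cinner b (B *v b))"
proof (rule complex_quadratic_nonneg_imp_le)
  fix s
  have "a + s *s b \<in> C" by (intro vec.subspace_add[OF C aC] vec.subspace_scale[OF C bC])
  from psd[OF this] show "0 \<le> Re (cinner a (B *v a)) + 2 * Re (s * cinner a (B *v b))
      + (cmod s)\<^sup>2 * Re (cinner b (B *v b))"
    by (simp only: hermitian_form_add_scaled[OF herm])
qed (rule psd[OF bC])

definition orthonormal_upto :: "nat \<Rightarrow> (nat \<Rightarrow> 'n::finite cvec) \<Rightarrow> bool" where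
  "orthonormal_upto k u \<longleftrightarrow>
     (\<forall>i<k. normalized (u i)) \<and> (\<forall>i<k. \<forall>j<k. i \<noteq> j \<longrightarrow> cinner (u i) (u j) = 0)"

definition eigenpairs_upto :: "'n::finite cmat \<Rightarrow> nat \<Rightarrow> (nat \<Rightarrow> 'n cvec) \<Rightarrow> (nat \<Rightarrow> real) \<Rightarrow> bool" where
  "eigenpairs_upto A k u g \<longleftrightarrow> (\<forall>i<k. A *v u i = complex_of_real (g i) *s u i)"

lemma orthonormal_upto_cinner:
  "orthonormal_upto k u \<Longrightarrow> i < k \<Longrightarrow> j < k \<Longrightarrow> cinner (u i) (u j) = (if i = j then 1 else 0)"
  by (auto simp: orthonormal_upto_def normalized_def)

lemma orthonormal_upto_snoc:
  assumes u: "orthonormal_upto k u" and v: "normalized v" and orth: "\<forall>i<k. cinner (u i) v = 0"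
  shows "orthonormal_upto (Suc k) (u(k := v))"
  unfolding orthonormal_upto_def
proof (intro conjI allI impI)
  fix i assume "i < Suc k"
  then show "normalized ((u(k := v)) i)" using u v by (auto simp: orthonormal_upto_def less_Suc_eq)
next
  fix i j assume ij: "i < Suc k" "j < Suc k" "i \<noteq> j"
  have "cinner v (u j) = 0" if "j < k" for j
    using orth that cinner_cnj[of "u j" v] by auto
  then show "cinner ((u(k := v)) i) ((u(k := v)) j) = 0"
    using u orth ij by (auto simp: orthonormal_upto_def less_Suc_eq)
qed

lemma subspace_orthogonal_family: "vec.subspace {x::'n::finite cvec. \<forall>i<k. cinner (u i) x = 0}"
  by (simp add: vec.subspace_def cinner_add_right cinner_scale_right)

lemma exists_orthogonal_to_family:
  assumes u: "orthonormal_upto k u" and k: "k < CARD('n::finite)"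
  shows "\<exists>x::'n cvec. x \<noteq> 0 \<and> (\<forall>i<k. cinner (u i) x = 0)"
proof -
  have "vec.span (u ` {..<k}) \<noteq> UNIV"
  proof
    assume "vec.span (u ` {..<k}) = UNIV"
    then have "vec.dim (UNIV :: 'n cvec set) \<le> card (u ` {..<k})"
      by (intro vec.dim_le_card) auto
    also have "\<dots> \<le> k" using card_image_le[of "{..<k}" u] by simp
    finally show False using k by (simp add: card_cart_basis)
  qed
  then obtain y where y: "y \<notin> vec.span (u ` {..<k})" by blast
  define p where "p = (\<Sum>i<k. cinner (u i) y *s u i)"
  have "p \<in> vec.span (u ` {..<k})"
    unfolding p_def by (intro vec.span_sum vec.span_scale vec.span_base) auto
  then have "y - p \<noteq> 0" using y by auto
  moreover have "cinner (u j) (y - p) = 0" if j: "j < k" for j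
  proof -
    have "cinner (u j) p = (\<Sum>i<k. if i = j then cinner (u j) y else 0)"
      unfolding p_def cinner_sum_right cinner_scale_right
      using u j by (intro sum.cong) (auto simp: orthonormal_upto_cinner)
    then show ?thesis using j by (simp add: cinner_diff_right)
  qed
  ultimately show ?thesis by blast
qed

lemma exists_rayleigh_maximizer:
  fixes A :: "'n::finite cmat"
  assumes C: "vec.subspace C" "closed C" and x0: "x0 \<in> C" "x0 \<noteq> 0"
  shows "\<exists>v\<in>C. normalized v \<and>
    (\<forall>x\<in>C. Re (cinner x (A *v x)) \<le> Re (cinner v (A *v v)) * Re (cinner x x))"
proof -
  define K where "K = C \<inter> sphere 0 1"
  have unit: "complex_of_real (1 / norm x) *s x \<in> K" if x: "x \<in> C" "x \<noteq> 0" for x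
  proof -
    have "norm (complex_of_real (1 / norm x) *s x) = 1"
      using x(2) by (simp only: of_real_smult_eq_scaleR) simp
    then show ?thesis using vec.subspace_scale[OF C(1) x(1)] by (simp add: K_def)
  qed
  have "compact K" unfolding K_def using compact_Int_closed[OF compact_sphere C(2)] by (simp add: Int_commute)
  moreover have "K \<noteq> {}" using unit[OF x0] by blast
  moreover have "continuous_on K (\<lambda>x. Re (cinner x (A *v x)))"
    unfolding cinner_def matrix_vector_mult_def by (intro continuous_intros)
  ultimately obtain v where v: "v \<in> K"
    and vmax: "\<And>y. y \<in> K \<Longrightarrow> Re (cinner y (A *v y)) \<le> Re (cinner v (A *v v))"
    by (meson continuous_attains_sup)
  have "Re (cinner x (A *v x)) \<le> Re (cinner v (A *v v)) * Re (cinner x x)" if x: "x \<in> C" for x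
  proof (cases "x = 0")
    case False
    have "Re (cinner x (A *v x)) / (norm x)\<^sup>2 \<le> Re (cinner v (A *v v))"
      using vmax[OF unit[OF x False]] False
      by (simp add: cinner_scale_form power_divide norm_divide)
    then show ?thesis using False by (simp add: cinner_self_norm field_simps)
  qed simp
  then show ?thesis using v by (auto simp: K_def normalized_iff_norm)
qed

lemma rayleigh_maximizer_eigvec:
  fixes A :: "'n::finite cmat"
  assumes herm: "hermitian A" and C: "vec.subspace C" and inv: "\<And>x. x \<in> C \<Longrightarrow> A *v x \<in> C"
    and vC: "v \<in> C" and v: "normalized v"
    and max: "\<And>x. x \<in> C \<Longrightarrow> Re (cinner x (A *v x)) \<le> Re (cinner v (A *v v)) * Re (cinner x x)"
  shows "A *v v = complex_of_real (Re (cinner v (A *v v))) *s v"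
proof -
  define m where "m = Re (cinner v (A *v v))"
  define B where "B = cscale (complex_of_real m) (mat 1) - A"
  have Bx: "B *v x = complex_of_real m *s x - A *v x" for x
    by (simp add: B_def matrix_vector_mult_diff_rdistrib cscale_matrix_vector_mult)
  have hB: "hermitian B"
    using herm by (simp add: B_def hermitian_def adj_diff adj_cscale)
  have psd: "0 \<le> Re (cinner x (B *v x))" if "x \<in> C" for x
    using max[OF that] by (simp add: Bx cinner_diff_right cinner_scale_right m_def)
  have BvC: "B *v v \<in> C"
    unfolding Bx by (intro vec.subspace_diff[OF C] vec.subspace_scale[OF C] vC inv)
  have "Re (cinner v (B *v v)) = 0"
    using v by (simp add: Bx cinner_diff_right cinner_scale_right m_def normalized_def)
  then have "cinner v (B *v (B *v v)) = 0"
    using hermitian_form_cauchy_schwarz[OF hB C vC BvC psd] by simp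
  then have "cinner (B *v v) (B *v v) = 0"
    using hB by (simp add: hermitian_cinner_swap)
  then show ?thesis by (simp add: cinner_self_eq_0 Bx m_def)
qed

lemma exists_eigvec_orthogonal_to_eigenpairs:
  fixes A :: "'n::finite cmat"
  assumes herm: "hermitian A" and u: "orthonormal_upto k u" and eig: "eigenpairs_upto A k u g"
    and k: "k < CARD('n)"
  shows "\<exists>v m. normalized v \<and> A *v v = complex_of_real m *s v \<and> (\<forall>i<k. cinner (u i) v = 0)"
proof -
  define C where "C = {x::'n cvec. \<forall>i<k. cinner (u i) x = 0}"
  have sub: "vec.subspace C" unfolding C_def by (rule subspace_orthogonal_family)
  have "closed {x. i < k \<longrightarrow> cinner (u i) x = 0}" for i
    by (cases "i < k") (simp_all add: closed_Collect_eq cinner_def continuous_intros)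
  then have closed: "closed C" unfolding C_def by (rule closed_Collect_all)
  have inv: "A *v x \<in> C" if "x \<in> C" for x
    using that eig herm by (simp add: C_def eigenpairs_upto_def cinner_scale_left
        flip: hermitian_cinner_swap)
  obtain x0 where "x0 \<in> C" "x0 \<noteq> 0"
    using exists_orthogonal_to_family[OF u k] unfolding C_def by blast
  with exists_rayleigh_maximizer[OF sub closed] obtain v where
    "v \<in> C" "normalized v"
    "\<forall>x\<in>C. Re (cinner x (A *v x)) \<le> Re (cinner v (A *v v)) * Re (cinner x x)"
    by blast
  with rayleigh_maximizer_eigvec[OF herm sub inv] show ?thesis
    unfolding C_def by blast
qed

lemma orthonormal_eigenbasis_extend:
  fixes A :: "'n::finite cmat"
  assumes herm: "hermitian A"
  shows "orthonormal_upto k u \<Longrightarrow> eigenpairs_upto A k u g \<Longrightarrow> k \<le> CARD('n) \<Longrightarrow>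
    \<exists>u' g'. orthonormal_upto CARD('n) u' \<and> eigenpairs_upto A CARD('n) u' g' \<and>
      (\<forall>i<k. u' i = u i \<and> g' i = g i)"
proof (induction "CARD('n) - k" arbitrary: k u g)
  case 0
  then show ?case by (metis diff_is_0_eq le_antisym)
next
  case (Suc d)
  then have k: "k < CARD('n)" by simp
  obtain v m where v: "normalized v" "A *v v = complex_of_real m *s v" "\<forall>i<k. cinner (u i) v = 0"
    using exists_eigvec_orthogonal_to_eigenpairs[OF herm Suc.prems(1,2) k] by blast
  have "orthonormal_upto (Suc k) (u(k := v))"
    using orthonormal_upto_snoc[OF Suc.prems(1) v(1,3)] .
  moreover have "eigenpairs_upto A (Suc k) (u(k := v)) (g(k := m))"
    using Suc.prems(2) v(2) by (auto simp: eigenpairs_upto_def less_Suc_eq)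
  moreover have "d = CARD('n) - Suc k" using Suc.hyps(2) by simp
  ultimately show ?case
    using Suc.hyps(1) k by (fastforce simp: less_Suc_eq)
qed

lemma hermitian_orthonormal_eigenbasis:
  fixes A :: "'n::finite cmat"
  assumes "hermitian A"
  obtains u g where "orthonormal_upto CARD('n) u" "eigenpairs_upto A CARD('n) u g"
  using orthonormal_eigenbasis_extend[OF assms, of 0]
  by (auto simp: orthonormal_upto_def eigenpairs_upto_def)

lemma outer_nth [simp]: "outer u v $ i $ j = u $ i * cnj (v $ j)"
  by (simp add: outer_def)

lemma matrix_vector_mult_outer: "outer u v *v x = cinner v x *s u"
  by (simp add: vec_eq_iff matrix_vector_mult_def cinner_def sum_distrib_left mult_ac)

lemma sum_outer_orthonormal_basis:
  assumes u: "orthonormal_upto CARD('n::finite) u"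
  shows "(\<Sum>k<CARD('n). outer (u k) (u k)) = (mat 1 :: 'n cmat)"
proof -
  obtain h where h: "bij_betw h {..<CARD('n)} (UNIV :: 'n set)"
    using ex_bij_betw_nat_finite[of "UNIV :: 'n set"] by (auto simp: lessThan_atLeast0)
  define hi where "hi = inv_into {..<CARD('n)} h"
  have hi: "hi j < CARD('n)" "h (hi j) = j" for j
  proof -
    have j: "j \<in> h ` {..<CARD('n)}" using h by (simp add: bij_betw_def)
    show "hi j < CARD('n)" using inv_into_into[OF j] by (simp add: hi_def)
    show "h (hi j) = j" using f_inv_into_f[OF j] by (simp add: hi_def)
  qed
  have hi_h: "hi (h k) = k" if "k < CARD('n)" for k
    using h that by (auto simp: hi_def bij_betw_def inv_into_f_f)
  text \<open>The matrix \<open>Q\<close> with columns \<open>u (hi j)\<close> is unitary, because it is left-invertible.\<close>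
  define Q :: "'n cmat" where "Q = (\<chi> i j. u (hi j) $ i)"
  have "(adj Q ** Q) $ a $ b = cinner (u (hi a)) (u (hi b))" for a b
    by (simp add: Q_def matrix_matrix_mult_def cinner_def)
  also have "cinner (u (hi a)) (u (hi b)) = (if a = b then 1 else 0)" for a b
    using orthonormal_upto_cinner[OF u hi(1) hi(1)] hi(2) by metis
  finally have "adj Q ** Q = mat 1" by (simp add: vec_eq_iff mat_def)
  then have QQ: "Q ** adj Q = mat 1" by (simp add: matrix_left_right_inverse)
  have "(Q ** adj Q) $ i $ i' = (\<Sum>j\<in>UNIV. u (hi j) $ i * cnj (u (hi j) $ i'))" for i i'
    by (simp add: Q_def matrix_matrix_mult_def)
  also have "\<dots> i i' = (\<Sum>k<CARD('n). u (hi (h k)) $ i * cnj (u (hi (h k)) $ i'))" for i i'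
    by (rule sum.reindex_bij_betw[OF h, symmetric])
  also have "\<dots> i i' = (\<Sum>k<CARD('n). outer (u k) (u k)) $ i $ i'" for i i'
    by (simp add: hi_h sum_component)
  finally show ?thesis using QQ by (simp add: vec_eq_iff)
qed

lemma orthonormal_basis_expansion:
  fixes x :: "'n::finite cvec"
  assumes "orthonormal_upto CARD('n::finite) u"
  shows "x = (\<Sum>k<CARD('n). cinner (u k) x *s u k)"
proof -
  have "x = (\<Sum>k<CARD('n). outer (u k) (u k)) *v x"
    using sum_outer_orthonormal_basis[OF assms] by simp
  then show ?thesis by (simp add: sum_matrix_vector_mult matrix_vector_mult_outer)
qed

lemma orthonormal_basis_parseval:
  fixes x y :: "'n::finite cvec"
  assumes "orthonormal_upto CARD('n::finite) u"
  shows "cinner y x = (\<Sum>k<CARD('n). cnj (cinner (u k) y) * cinner (u k) x)"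
proof -
  have "cinner y x = cinner y (\<Sum>k<CARD('n). cinner (u k) x *s u k)"
    using orthonormal_basis_expansion[OF assms, of x] by simp
  then show ?thesis by (simp add: cinner_sum_right cinner_scale_right cinner_cnj mult.commute)
qed

lemma orthonormal_basis_norm2:
  fixes x :: "'n::finite cvec"
  assumes "orthonormal_upto CARD('n::finite) u"
  shows "Re (cinner x x) = (\<Sum>k<CARD('n). (cmod (cinner (u k) x))\<^sup>2)"
  using orthonormal_basis_parseval[OF assms, of x x] by (simp add: cnj_mult_self)

lemma eigenbasis_cinner:
  assumes "eigenpairs_upto A k u g" "hermitian A" "i < k"
  shows "cinner (u i) (A *v x) = complex_of_real (g i) * cinner (u i) x"
  using assms by (simp add: eigenpairs_upto_def cinner_scale_left flip: hermitian_cinner_swap)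

lemma eigenbasis_hermitian_form:
  fixes x :: "'n::finite cvec"
  assumes u: "orthonormal_upto CARD('n::finite) u" and eig: "eigenpairs_upto A CARD('n) u g"
    and herm: "hermitian A"
  shows "Re (cinner x (A *v x)) = (\<Sum>k<CARD('n). g k * (cmod (cinner (u k) x))\<^sup>2)"
proof -
  have "cinner x (A *v x) = (\<Sum>k<CARD('n). complex_of_real (g k) * (cnj (cinner (u k) x) * cinner (u k) x))"
    unfolding orthonormal_basis_parseval[OF u, of x]
    by (intro sum.cong refl) (simp add: eigenbasis_cinner[OF eig herm] mult_ac)
  then show ?thesis by (simp add: cnj_mult_self Re_sum)
qed

lemma eigvals_eigenbasis:
  fixes A :: "'n::finite cmat"
  assumes u: "orthonormal_upto CARD('n) u" and eig: "eigenpairs_upto A CARD('n) u g"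
    and herm: "hermitian A"
  shows "eigvals A = (\<lambda>k. complex_of_real (g k)) ` {..<CARD('n)}"
proof
  show "(\<lambda>k. complex_of_real (g k)) ` {..<CARD('n)} \<subseteq> eigvals A"
  proof
    fix c assume "c \<in> (\<lambda>k. complex_of_real (g k)) ` {..<CARD('n)}"
    then obtain k where k: "k < CARD('n)" "c = complex_of_real (g k)" by auto
    have "u k \<noteq> 0" using u k by (auto simp: orthonormal_upto_def normalized_def)
    then show "c \<in> eigvals A" using eig k by (auto simp: eigvals_def eigenpairs_upto_def)
  qed
next
  show "eigvals A \<subseteq> (\<lambda>k. complex_of_real (g k)) ` {..<CARD('n)}"
  proof
    fix c assume "c \<in> eigvals A"
    then obtain v where v: "v \<noteq> 0" "A *v v = c *s v" by (auto simp: eigvals_def)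
    have "\<exists>k<CARD('n). cinner (u k) v \<noteq> 0"
    proof (rule ccontr)
      assume "\<not> ?thesis"
      then show False using v(1) orthonormal_basis_expansion[OF u, of v] by simp
    qed
    then obtain k where k: "k < CARD('n)" "cinner (u k) v \<noteq> 0" by blast
    have "c * cinner (u k) v = complex_of_real (g k) * cinner (u k) v"
      using eigenbasis_cinner[OF eig herm k(1), of v] v(2) by (simp add: cinner_scale_right)
    then show "c \<in> (\<lambda>k. complex_of_real (g k)) ` {..<CARD('n)}" using k by auto
  qed
qed

lemma eigenbasis_lambda:
  fixes A :: "'n::finite cmat"
  assumes u: "orthonormal_upto CARD('n) u" and eig: "eigenpairs_upto A CARD('n) u g"
    and herm: "hermitian A"
  shows "\<exists>k<CARD('n). g k = lambda_max A" and "\<exists>k<CARD('n). g k = lambda_min A"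
    and "\<And>k. k < CARD('n) \<Longrightarrow> lambda_min A \<le> g k \<and> g k \<le> lambda_max A"
proof -
  have Re_eigvals: "Re ` eigvals A = g ` {..<CARD('n)}"
    unfolding eigvals_eigenbasis[OF assms] image_image by simp
  have fin: "finite (g ` {..<CARD('n)})" and ne: "g ` {..<CARD('n)} \<noteq> {}"
    by (auto simp: lessThan_empty_iff)
  show "\<exists>k<CARD('n). g k = lambda_max A"
    using Max_in[OF fin ne] by (auto simp: lambda_max_def Re_eigvals)
  show "\<exists>k<CARD('n). g k = lambda_min A"
    using Min_in[OF fin ne] by (auto simp: lambda_min_def Re_eigvals)
  show "lambda_min A \<le> g k \<and> g k \<le> lambda_max A" if "k < CARD('n)" for k
    using that fin by (simp add: lambda_max_def lambda_min_def Re_eigvals)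
qed

lemma hermitian_form_le_lambda_max:
  fixes A :: "'n::finite cmat"
  assumes herm: "hermitian A"
  shows "Re (cinner x (A *v x)) \<le> lambda_max A * Re (cinner x x)"
proof -
  obtain u g where u: "orthonormal_upto CARD('n) u" and eig: "eigenpairs_upto A CARD('n) u g"
    using hermitian_orthonormal_eigenbasis[OF herm] .
  show ?thesis
    unfolding eigenbasis_hermitian_form[OF u eig herm] orthonormal_basis_norm2[OF u] sum_distrib_left
    using eigenbasis_lambda(3)[OF u eig herm] by (intro sum_mono mult_right_mono) auto
qed

lemma hermitian_form_ge_lambda_min:
  fixes A :: "'n::finite cmat"
  assumes herm: "hermitian A"
  shows "lambda_min A * Re (cinner x x) \<le> Re (cinner x (A *v x))"
proof -
  obtain u g where u: "orthonormal_upto CARD('n) u" and eig: "eigenpairs_upto A CARD('n) u g"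
    using hermitian_orthonormal_eigenbasis[OF herm] .
  show ?thesis
    unfolding eigenbasis_hermitian_form[OF u eig herm] orthonormal_basis_norm2[OF u] sum_distrib_left
    using eigenbasis_lambda(3)[OF u eig herm] by (intro sum_mono mult_right_mono) auto
qed

lemma spectral_gap_nonneg:
  fixes A :: "'n::finite cmat"
  assumes herm: "hermitian A"
  shows "0 \<le> spectral_gap A"
proof -
  obtain u g where u: "orthonormal_upto CARD('n) u" and eig: "eigenpairs_upto A CARD('n) u g"
    using hermitian_orthonormal_eigenbasis[OF herm] .
  show ?thesis
    using eigenbasis_lambda(1,3)[OF u eig herm] by (force simp: spectral_gap_def)
qed

lemma exists_orthonormal_extremal_eigvecs:
  fixes A :: "'n::finite cmat"
  assumes herm: "hermitian A" and n: "2 \<le> CARD('n)"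
  shows "\<exists>c d. normalized c \<and> normalized d \<and> cinner c d = 0 \<and>
      A *v c = complex_of_real (lambda_max A) *s c \<and> A *v d = complex_of_real (lambda_min A) *s d"
proof -
  obtain u g where u: "orthonormal_upto CARD('n) u" and eig: "eigenpairs_upto A CARD('n) u g"
    using hermitian_orthonormal_eigenbasis[OF herm] .
  obtain k1 where k1: "k1 < CARD('n)" "g k1 = lambda_max A"
    using eigenbasis_lambda(1)[OF u eig herm] by blast
  obtain k2 where k2: "k2 < CARD('n)" "g k2 = lambda_min A"
    using eigenbasis_lambda(2)[OF u eig herm] by blast
  text \<open>If both extremes sit on one basis vector, the spectrum is a single point.\<close>
  obtain k3 where k3: "k3 < CARD('n)" "k3 \<noteq> k1" "g k3 = lambda_min A"
  proof (cases "k1 = k2")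
    case True
    define k3 where "k3 = (if k1 = 0 then 1 else (0::nat))"
    have "k3 < CARD('n)" "k3 \<noteq> k1" using n by (auto simp: k3_def)
    moreover have "g k3 = lambda_min A"
      using eigenbasis_lambda(3)[OF u eig herm \<open>k3 < CARD('n)\<close>] k1 k2 True by simp
    ultimately show ?thesis using that by blast
  qed (use k2 that in blast)
  show ?thesis
    using u eig k1 k3 by (metis eigenpairs_upto_def orthonormal_upto_def)
qed

lemma hermitian_lambda_max_eigvec:
  fixes A :: "'n::finite cmat"
  assumes "hermitian A"
  obtains v where "normalized v" "A *v v = complex_of_real (lambda_max A) *s v"
proof -
  obtain u g where u: "orthonormal_upto CARD('n) u" and eig: "eigenpairs_upto A CARD('n) u g"
    using hermitian_orthonormal_eigenbasis[OF assms] .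
  then show ?thesis
    using that eigenbasis_lambda(1)[OF u eig assms]
    by (metis eigenpairs_upto_def orthonormal_upto_def)
qed

lemma hermitian_lambda_min_eigvec:
  fixes A :: "'n::finite cmat"
  assumes "hermitian A"
  obtains v where "normalized v" "A *v v = complex_of_real (lambda_min A) *s v"
proof -
  obtain u g where u: "orthonormal_upto CARD('n) u" and eig: "eigenpairs_upto A CARD('n) u g"
    using hermitian_orthonormal_eigenbasis[OF assms] .
  then show ?thesis
    using that eigenbasis_lambda(2)[OF u eig assms]
    by (metis eigenpairs_upto_def orthonormal_upto_def)
qed

lemma spectral_gap_pos_imp_card_ge_2:
  fixes A :: "'n::finite cmat"
  assumes herm: "hermitian A" and gap: "0 < spectral_gap A"
  shows "2 \<le> CARD('n)"
proof (rule ccontr)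
  assume "\<not> 2 \<le> CARD('n)"
  then have n1: "CARD('n) = 1" using zero_less_card_finite[where 'a='n] by linarith
  obtain u g where u: "orthonormal_upto CARD('n) u" and eig: "eigenpairs_upto A CARD('n) u g"
    using hermitian_orthonormal_eigenbasis[OF herm] .
  have "lambda_max A = lambda_min A"
    using eigenbasis_lambda(1,2)[OF u eig herm] n1 by force
  then show False using gap by (simp add: spectral_gap_def)
qed

lemma spectral_gap_eq_0_imp_scalar:
  fixes A :: "'n::finite cmat"
  assumes herm: "hermitian A" and gap: "spectral_gap A = 0"
  shows "A *v x = complex_of_real (lambda_max A) *s x"
proof -
  obtain u g where u: "orthonormal_upto CARD('n) u" and eig: "eigenpairs_upto A CARD('n) u g"
    using hermitian_orthonormal_eigenbasis[OF herm] .
  have "g k = lambda_max A" if "k < CARD('n)" for k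
    using eigenbasis_lambda(3)[OF u eig herm that] gap by (simp add: spectral_gap_def)
  then have "A *v x = (\<Sum>k<CARD('n). complex_of_real (lambda_max A) *s (cinner (u k) x *s u k))"
    using eig by (subst orthonormal_basis_expansion[OF u, of x], subst matrix_vector_sum_distrib)
      (auto intro!: sum.cong simp: matrix_vector_mult_smult eigenpairs_upto_def vector_smult_assoc mult.commute)
  also have "\<dots> = complex_of_real (lambda_max A) *s x"
    by (subst (2) orthonormal_basis_expansion[OF u, of x]) (rule vec.scale_sum_right[symmetric])
  finally show ?thesis .
qed

lemma hermitian_eigvecs_orthogonal:
  assumes herm: "hermitian A" and v: "A *v v = complex_of_real l1 *s v"
    and w: "A *v w = complex_of_real l2 *s w" and ne: "l1 \<noteq> l2"
  shows "cinner w v = 0"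
proof -
  have "complex_of_real l1 * cinner w v = cinner w (A *v v)" by (simp add: v cinner_scale_right)
  also have "\<dots> = cinner (A *v w) v" using herm by (simp add: hermitian_cinner_swap)
  also have "\<dots> = complex_of_real l2 * cinner w v" by (simp add: w cinner_scale_left)
  finally show ?thesis using ne by simp
qed

lemma spectral_gap_add_le:
  fixes A B :: "'n::finite cmat"
  assumes hA: "hermitian A" and hB: "hermitian B"
  shows "spectral_gap (A + B) \<le> spectral_gap A + spectral_gap B"
proof -
  have hAB: "hermitian (A + B)" using hA hB by (rule hermitian_add)
  have form_add: "cinner v ((A + B) *v v) = cinner v (A *v v) + cinner v (B *v v)" for v
    by (simp add: matrix_vector_mult_add_rdistrib cinner_add_right)
  obtain v where v: "normalized v" "(A + B) *v v = complex_of_real (lambda_max (A + B)) *s v"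
    using hermitian_lambda_max_eigvec[OF hAB] .
  obtain w where w: "normalized w" "(A + B) *v w = complex_of_real (lambda_min (A + B)) *s w"
    using hermitian_lambda_min_eigvec[OF hAB] .
  have "lambda_max (A + B) = Re (cinner v ((A + B) *v v))"
    using v by (simp add: cinner_scale_right normalized_def)
  also have "\<dots> = Re (cinner v (A *v v)) + Re (cinner v (B *v v))"
    by (simp add: form_add)
  also have "\<dots> \<le> lambda_max A + lambda_max B"
    using hermitian_form_le_lambda_max[OF hA, of v] hermitian_form_le_lambda_max[OF hB, of v] v(1)
    by (simp add: normalized_def)
  finally have "lambda_max (A + B) \<le> lambda_max A + lambda_max B" .
  moreover have "lambda_min (A + B) = Re (cinner w ((A + B) *v w))"
    using w by (simp add: cinner_scale_right normalized_def)
  moreover have "\<dots> = Re (cinner w (A *v w)) + Re (cinner w (B *v w))"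
    by (simp add: form_add)
  moreover have "lambda_min A + lambda_min B \<le> \<dots>"
    using hermitian_form_ge_lambda_min[OF hA, of w] hermitian_form_ge_lambda_min[OF hB, of w] w(1)
    by (simp add: normalized_def)
  ultimately show ?thesis by (simp add: spectral_gap_def)
qed

lemma eigvals_unitary_conj_subset:
  assumes "unitary W"
  shows "eigvals A \<subseteq> eigvals (W ** A ** adj W)"
proof
  fix c assume "c \<in> eigvals A"
  then obtain v where v: "v \<noteq> 0" "A *v v = c *s v" by (auto simp: eigvals_def)
  have "W *v v \<noteq> 0"
    using v(1) unitary_adj_mvec[OF assms, of v] by auto
  moreover have "(W ** A ** adj W) *v (W *v v) = c *s (W *v v)"
    using v by (simp add: matrix_vector_mul_assoc[symmetric] unitary_adj_mvec[OF assms] matrix_vector_mult_smult)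
  ultimately show "c \<in> eigvals (W ** A ** adj W)" by (auto simp: eigvals_def)
qed

lemma spectral_gap_unitary_conj:
  assumes "unitary W"
  shows "spectral_gap (W ** A ** adj W) = spectral_gap A"
proof -
  have "eigvals (W ** A ** adj W) \<subseteq> eigvals (adj W ** (W ** A ** adj W) ** adj (adj W))"
    by (rule eigvals_unitary_conj_subset[OF unitary_adj[OF assms]])
  also have "adj W ** (W ** A ** adj W) ** adj (adj W) = A"
    using assms by (simp add: matrix_mul_assoc unitary_def) (simp flip: matrix_mul_assoc)
  finally have "eigvals (W ** A ** adj W) = eigvals A"
    using eigvals_unitary_conj_subset[OF assms] by blast
  then show ?thesis by (simp add: spectral_gap_def lambda_max_def lambda_min_def)
qed

section \<open>Trace, density matrices and diagonal Fisher information\<close>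

lemma mtrace_comm: "mtrace (A ** B) = mtrace (B ** (A :: 'n::finite cmat))"
proof -
  have "mtrace (A ** B) = (\<Sum>i\<in>UNIV. \<Sum>k\<in>UNIV. A$i$k * B$k$i)"
    by (simp add: mtrace_def matrix_matrix_mult_def)
  also have "\<dots> = (\<Sum>k\<in>UNIV. \<Sum>i\<in>UNIV. A$i$k * B$k$i)" by (rule sum.swap)
  also have "\<dots> = mtrace (B ** A)"
    by (simp add: mtrace_def matrix_matrix_mult_def mult.commute)
  finally show ?thesis .
qed

lemma mtrace_sum: "mtrace (\<Sum>k\<in>K. M k) = (\<Sum>k\<in>K. mtrace (M k))"
  unfolding mtrace_def by (simp add: sum_component) (rule sum.swap)

lemma mtrace_mult_outer: "mtrace (M ** outer u v) = cinner v (M *v u)"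
  unfolding mtrace_def matrix_matrix_mult_def cinner_def matrix_vector_mult_def
  by (simp add: sum_distrib_left mult_ac)

lemma mtrace_orthonormal_basis:
  fixes M :: "'n::finite cmat"
  assumes "orthonormal_upto CARD('n::finite) u"
  shows "mtrace M = (\<Sum>k<CARD('n). cinner (u k) (M *v u k))"
proof -
  have "mtrace M = mtrace (M ** (\<Sum>k<CARD('n). outer (u k) (u k)))"
    using sum_outer_orthonormal_basis[OF assms] by simp
  then show ?thesis by (simp add: matrix_sum_ldistrib mtrace_sum mtrace_mult_outer)
qed

lemma cinner_axis_mvec_axis: "cinner (axis i 1) (M *v axis j 1) = M $ i $ j"
  by (simp add: cinner_axis_left matrix_vector_mult_axis)

lemma sandwich_diag: "cinner (K *v axis j 1) (R *v (K *v axis j 1)) = (adj K ** R ** K) $ j $ j"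
proof -
  have "cinner (K *v axis j 1) (R *v (K *v axis j 1)) = cinner (axis j 1) (adj K *v (R *v (K *v axis j 1)))"
    using cinner_adj[of "axis j 1" "adj K"] by simp
  also have "\<dots> = cinner (axis j 1) ((adj K ** R ** K) *v axis j 1)"
    by (metis matrix_vector_mul_assoc matrix_mul_assoc)
  finally show ?thesis by (simp add: cinner_axis_mvec_axis)
qed

lemma density_matrix_psd: "density_matrix \<rho> \<Longrightarrow> 0 \<le> Re (cinner v (\<rho> *v v))"
  by (simp add: density_matrix_def)

lemma density_matrix_unitary_conj:
  assumes d: "density_matrix \<rho>" and W: "unitary W"
  shows "density_matrix (W ** \<rho> ** adj W)"
proof -
  have "cinner v ((W ** \<rho> ** adj W) *v v) = cinner (adj W *v v) (\<rho> *v (adj W *v v))" for v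
    by (simp add: matrix_vector_mul_assoc[symmetric] cinner_adj)
  moreover have "mtrace (W ** \<rho> ** adj W) = mtrace \<rho>"
    using mtrace_comm[of "W ** \<rho>" "adj W"] W by (simp add: matrix_mul_assoc unitary_def)
  ultimately show ?thesis
    using d by (simp add: density_matrix_def hermitian_unitary_conj)
qed

lemma adj_outer: "adj (outer u v) = outer v u"
  by (simp add: vec_eq_iff)

lemma outer_matrix_vector_mult: "outer (M *v u) (M *v u) = M ** outer u u ** adj (M :: 'n::finite cmat)"
  by (simp add: vec_eq_iff matrix_matrix_mult_def matrix_vector_mult_def sum_distrib_left
      sum_distrib_right mult_ac)

lemma density_matrix_outer:
  assumes "normalized \<psi>"
  shows "density_matrix (outer \<psi> \<psi>)"
proof -
  have "cinner v (outer \<psi> \<psi> *v v) = complex_of_real ((cmod (cinner \<psi> v))\<^sup>2)" for v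
    by (simp add: matrix_vector_mult_outer cinner_scale_right mult_cnj_self cinner_cnj[of \<psi> v, symmetric])
  moreover have "mtrace (outer \<psi> \<psi>) = 1"
    using assms by (simp add: mtrace_def normalized_def cinner_def mult.commute)
  ultimately show ?thesis by (simp add: density_matrix_def hermitian_def adj_outer)
qed

lemma mtrace_centered_sandwich_le:
  fixes G \<rho> :: "'n::finite cmat"
  assumes hG: "hermitian G" and \<rho>: "density_matrix \<rho>"
  defines "K \<equiv> G - cscale (complex_of_real ((lambda_max G + lambda_min G) / 2)) (mat 1)"
  shows "Re (mtrace (K ** \<rho> ** K)) \<le> (spectral_gap G / 2)\<^sup>2"
proof -
  define c where "c = (lambda_max G + lambda_min G) / 2"
  obtain u g where u: "orthonormal_upto CARD('n) u" and eig: "eigenpairs_upto G CARD('n) u g"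
    using hermitian_orthonormal_eigenbasis[OF hG] .
  have hK: "hermitian K" unfolding K_def by (rule hermitian_sub_scalar[OF hG])
  have bound: "Re (cinner (u k) ((K ** \<rho> ** K) *v u k)) \<le> (spectral_gap G / 2)\<^sup>2 * Re (cinner (u k) (\<rho> *v u k))"
    if k: "k < CARD('n)" for k
  proof -
    have Ku: "K *v u k = complex_of_real (g k - c) *s u k"
      using eig k by (simp add: K_def c_def eigenpairs_upto_def matrix_vector_mult_diff_rdistrib
          cscale_matrix_vector_mult vector_sub_rdistrib)
    have "cinner (u k) ((K ** \<rho> ** K) *v u k) = cinner (K *v u k) (\<rho> *v (K *v u k))"
      using hK by (simp add: matrix_vector_mul_assoc[symmetric] cinner_adj hermitian_def)
    also have "\<dots> = complex_of_real ((g k - c)\<^sup>2) * cinner (u k) (\<rho> *v u k)"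
      by (simp only: Ku matrix_vector_mult_smult cinner_scale_left cinner_scale_right)
        (simp add: power2_eq_square mult_ac)
    finally have sandwich: "cinner (u k) ((K ** \<rho> ** K) *v u k) = complex_of_real ((g k - c)\<^sup>2) * cinner (u k) (\<rho> *v u k)" .
    have "\<bar>g k - c\<bar> \<le> spectral_gap G / 2"
      using eigenbasis_lambda(3)[OF u eig hG k] unfolding c_def spectral_gap_def abs_le_iff
      by (simp add: field_simps)
    then have "\<bar>g k - c\<bar> \<le> \<bar>spectral_gap G / 2\<bar>" by linarith
    then have "(g k - c)\<^sup>2 \<le> (spectral_gap G / 2)\<^sup>2"
      by (simp only: abs_le_square_iff)
    then show ?thesis by (simp add: sandwich mult_right_mono density_matrix_psd[OF \<rho>])
  qed
  have "Re (mtrace (K ** \<rho> ** K)) \<le> (\<Sum>k<CARD('n). (spectral_gap G / 2)\<^sup>2 * Re (cinner (u k) (\<rho> *v u k)))"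
    unfolding mtrace_orthonormal_basis[OF u] Re_sum by (intro sum_mono bound) auto
  also have "\<dots> = (spectral_gap G / 2)\<^sup>2"
    using \<rho> by (simp add: mtrace_orthonormal_basis[OF u, symmetric] Re_sum[symmetric]
        sum_distrib_left[symmetric] density_matrix_def)
  finally show ?thesis .
qed

text \<open>\<open>liouvillian G \<rho> = -i[G, \<rho>]\<close> is the derivative of \<open>W \<rho>0 W\<^sup>\<dagger>\<close> when \<open>i W' W\<^sup>\<dagger> = G\<close>, and
  \<open>diag_fisher G \<rho>\<close> is the Fisher information of the computational-basis measurement of that
  state.\<close>

definition liouvillian :: "'n::finite cmat \<Rightarrow> 'n cmat \<Rightarrow> 'n cmat" where
  "liouvillian G \<rho> = cscale (- \<i>) (G ** \<rho>) + cscale \<i> (\<rho> ** G)"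

definition diag_fisher :: "'n::finite cmat \<Rightarrow> 'n cmat \<Rightarrow> real" where
  "diag_fisher G \<rho> = (\<Sum>j\<in>{j. 0 < Re (\<rho> $ j $ j)}.
      Re (\<rho> $ j $ j) * (Re (liouvillian G \<rho> $ j $ j) / Re (\<rho> $ j $ j))\<^sup>2)"

lemma liouvillian_sub_scalar: "liouvillian (G - cscale c (mat 1)) \<rho> = liouvillian G \<rho>"
  by (simp add: liouvillian_def matrix_diff_rdistrib matrix_diff_ldistrib cscale_mult_left cscale_mult_right
      vec_eq_iff algebra_simps)

lemma liouvillian_diag_sq_le:
  fixes K \<rho> :: "'n::finite cmat"
  assumes hK: "hermitian K" and \<rho>: "density_matrix \<rho>"
  shows "(Re (liouvillian K \<rho> $ j $ j))\<^sup>2 \<le> 4 * (Re (\<rho> $ j $ j) * Re ((K ** \<rho> ** K) $ j $ j))"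
proof -
  define z where "z = (\<rho> ** K) $ j $ j"
  have h\<rho>: "hermitian \<rho>" using \<rho> by (simp add: density_matrix_def)
  have "adj (\<rho> ** K) = K ** \<rho>" using h\<rho> hK by (simp add: adj_mult hermitian_def)
  then have "(K ** \<rho>) $ j $ j = cnj z" by (metis adj_nth z_def)
  then have "Re (liouvillian K \<rho> $ j $ j) = - 2 * Im z"
    by (simp add: liouvillian_def z_def)
  then have "(Re (liouvillian K \<rho> $ j $ j))\<^sup>2 \<le> 4 * (cmod z)\<^sup>2"
    using abs_Im_le_cmod[of z] by (simp add: power_mult_distrib abs_le_square_iff[symmetric])
  also have "z = cinner (axis j 1) (\<rho> *v (K *v axis j 1))"
    by (simp add: matrix_vector_mul_assoc cinner_axis_mvec_axis z_def)
  also have "(cmod \<dots>)\<^sup>2 \<le> Re (\<rho> $ j $ j) * Re ((K ** \<rho> ** K) $ j $ j)"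
    using hermitian_form_cauchy_schwarz[OF h\<rho> vec.subspace_UNIV, of "axis j 1" "K *v axis j 1"]
      density_matrix_psd[OF \<rho>] hK
    by (simp add: sandwich_diag hermitian_def cinner_axis_mvec_axis)
  finally show ?thesis by simp
qed

lemma diag_fisher_le_mtrace:
  fixes K \<rho> :: "'n::finite cmat"
  assumes hK: "hermitian K" and \<rho>: "density_matrix \<rho>"
  shows "diag_fisher K \<rho> \<le> 4 * Re (mtrace (K ** \<rho> ** K))"
proof -
  define p where "p j = Re (\<rho> $ j $ j)" for j
  define q where "q j = Re ((K ** \<rho> ** K) $ j $ j)" for j
  have q0: "0 \<le> q j" for j
    using density_matrix_psd[OF \<rho>, of "K *v axis j 1"] hK
    by (simp add: sandwich_diag hermitian_def q_def)
  have "p j * (Re (liouvillian K \<rho> $ j $ j) / p j)\<^sup>2 \<le> 4 * q j" if "0 < p j" for j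
    using liouvillian_diag_sq_le[OF hK \<rho>, of j] that
    by (simp add: p_def q_def power2_eq_square field_simps)
  then have "diag_fisher K \<rho> \<le> (\<Sum>j\<in>{j. 0 < p j}. 4 * q j)"
    unfolding diag_fisher_def p_def[symmetric] by (intro sum_mono) auto
  also have "\<dots> \<le> (\<Sum>j\<in>UNIV. 4 * q j)"
    by (intro sum_mono2) (auto simp: q0)
  also have "\<dots> = 4 * Re (mtrace (K ** \<rho> ** K))"
    by (simp add: q_def mtrace_def Re_sum sum_distrib_left)
  finally show ?thesis .
qed

lemma diag_fisher_le_spectral_gap_sq:
  fixes G \<rho> :: "'n::finite cmat"
  assumes hG: "hermitian G" and \<rho>: "density_matrix \<rho>"
  shows "diag_fisher G \<rho> \<le> (spectral_gap G)\<^sup>2"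
proof -
  define K where "K = G - cscale (complex_of_real ((lambda_max G + lambda_min G) / 2)) (mat 1)"
  have "diag_fisher G \<rho> = diag_fisher K \<rho>"
    by (simp add: diag_fisher_def K_def liouvillian_sub_scalar)
  also have "\<dots> \<le> 4 * Re (mtrace (K ** \<rho> ** K))"
    unfolding K_def by (intro diag_fisher_le_mtrace hermitian_sub_scalar hG \<rho>)
  also have "\<dots> \<le> 4 * (spectral_gap G / 2)\<^sup>2"
    using mtrace_centered_sandwich_le[OF hG \<rho>] by (simp add: K_def)
  also have "\<dots> = (spectral_gap G)\<^sup>2" by (simp add: power2_eq_square)
  finally show ?thesis .
qed

section \<open>Superpositions of equioriented eigenvectors\<close>

lemma cmod_inv_sqrt2_sq: "(cmod (complex_of_real (1 / sqrt 2)))\<^sup>2 = 1 / 2"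
  by (simp only: norm_of_real) (simp add: power_divide)

lemma normalized_superposition:
  assumes a: "normalized a" and b: "normalized b" and ab: "cinner b a = 0" and \<omega>: "cmod \<omega> = 1"
  shows "normalized (complex_of_real (1 / sqrt 2) *s (a + \<omega> *s b))"
proof -
  define s where "s = complex_of_real (1 / sqrt 2)"
  have s2: "cnj s * s = 1 / 2"
    by (simp only: s_def cnj_mult_self cmod_inv_sqrt2_sq) simp
  have "cinner a b = 0" using ab cinner_cnj[of b a] by simp
  then have "cinner (a + \<omega> *s b) (a + \<omega> *s b) = 2"
    using a b ab \<omega> by (simp add: cinner_scale_left cinner_scale_right cinner_add_left
        cinner_add_right cnj_mult_self mult_cnj_self normalized_def)
  moreover have "cinner (s *s (a + \<omega> *s b)) (s *s (a + \<omega> *s b))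
      = (cnj s * s) * cinner (a + \<omega> *s b) (a + \<omega> *s b)"
    by (simp only: cinner_scale_left cinner_scale_right mult_ac)
  ultimately have "cinner (s *s (a + \<omega> *s b)) (s *s (a + \<omega> *s b)) = 1"
    by (simp add: s2)
  then show ?thesis by (simp add: normalized_def s_def)
qed

lemma liouvillian_outer_diag:
  assumes "hermitian G"
  shows "Re (liouvillian G (outer \<psi> \<psi>) $ j $ j) = 2 * Im ((G *v \<psi>) $ j * cnj (\<psi> $ j))"
proof -
  have "G ** outer \<psi> \<psi> = outer (G *v \<psi>) \<psi>" "outer \<psi> \<psi> ** G = outer \<psi> (G *v \<psi>)"
    using assms by (simp_all add: vec_eq_iff matrix_matrix_mult_def matrix_vector_mult_def
        sum_distrib_left sum_distrib_right mult_ac hermitian_def flip: adj_nth)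
  then show ?thesis by (simp add: liouvillian_def)
qed

lemma equal_modulus_fisher_term:
  fixes \<alpha> \<beta> :: complex
  assumes eq: "cmod \<alpha> = cmod \<beta>" and pos: "0 < (cmod (\<alpha> + \<beta>))\<^sup>2 / 2"
  shows "(cmod (\<alpha> + \<beta>))\<^sup>2 / 2 * (c * Im (\<alpha> * cnj \<beta>) / ((cmod (\<alpha> + \<beta>))\<^sup>2 / 2))\<^sup>2
         = c\<^sup>2 * ((cmod \<alpha>)\<^sup>2 - Re (\<alpha> * cnj \<beta>))"
proof -
  define w where "w = \<alpha> * cnj \<beta>"
  define r where "r = (cmod \<alpha>)\<^sup>2"
  have "(cmod (\<alpha> + \<beta>))\<^sup>2 = (cmod \<alpha>)\<^sup>2 + (cmod \<beta>)\<^sup>2 + 2 * Re w"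
    unfolding cmod_power2 by (simp add: w_def power2_eq_square algebra_simps)
  then have p: "(cmod (\<alpha> + \<beta>))\<^sup>2 / 2 = r + Re w" using eq by (simp add: r_def)
  have "cmod w = r" using eq by (simp add: w_def r_def norm_mult power2_eq_square)
  then have "(Re w)\<^sup>2 + (Im w)\<^sup>2 = r\<^sup>2" by (simp flip: cmod_power2)
  then have im: "(Im w)\<^sup>2 = (r - Re w) * (r + Re w)" by (simp add: power2_eq_square algebra_simps)
  have "(r + Re w) * (c * Im w / (r + Re w))\<^sup>2 = c\<^sup>2 * ((Im w)\<^sup>2 / (r + Re w))"
    by (simp add: power2_eq_square)
  also have "\<dots> = c\<^sup>2 * (r - Re w)"
    using pos p by (simp add: im)
  finally show ?thesis by (simp add: p r_def w_def)
qed

lemma outer_superposition_diag: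
  "Re (outer (complex_of_real (1 / sqrt 2) *s (a + b)) (complex_of_real (1 / sqrt 2) *s (a + b)) $ j $ j)
     = (cmod (a $ j + b $ j))\<^sup>2 / 2"
  by (simp only: outer_nth mult_cnj_self Re_complex_of_real vector_smult_component vector_add_component
      norm_mult power_mult_distrib cmod_inv_sqrt2_sq)

lemma liouvillian_superposition_diag:
  assumes hG: "hermitian G" and Ga: "G *v a = complex_of_real l1 *s a"
    and Gb: "G *v b = complex_of_real l2 *s b"
  defines "\<psi> \<equiv> complex_of_real (1 / sqrt 2) *s (a + b)"
  shows "Re (liouvillian G (outer \<psi> \<psi>) $ j $ j) = (l1 - l2) * Im (a $ j * cnj (b $ j))"
proof -
  define s where "s = complex_of_real (1 / sqrt 2)"
  have s2: "s * cnj s = 1 / 2"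
    by (simp only: s_def mult_cnj_self cmod_inv_sqrt2_sq) simp
  have \<psi>: "\<psi> = s *s (a + b)" by (simp add: \<psi>_def s_def)
  have "(G *v \<psi>) $ j * cnj (\<psi> $ j)
      = (s * cnj s) * ((complex_of_real l1 * a $ j + complex_of_real l2 * b $ j) * cnj (a $ j + b $ j))"
    by (simp add: \<psi> matrix_vector_mult_smult matrix_vector_right_distrib Ga Gb algebra_simps)
  moreover have "Im (a $ j * cnj (a $ j)) = 0" "Im (b $ j * cnj (b $ j)) = 0"
    by (simp_all add: mult_cnj_self)
  moreover have "Im (b $ j * cnj (a $ j)) = - Im (a $ j * cnj (b $ j))"
    by (simp add: mult.commute)
  ultimately show ?thesis
    by (simp only: liouvillian_outer_diag[OF hG] s2) (simp add: algebra_simps field_simps)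
qed

lemma diag_fisher_superposition:
  fixes G :: "'n::finite cmat" and a b :: "'n cvec"
  assumes hG: "hermitian G" and Ga: "G *v a = complex_of_real l1 *s a"
    and Gb: "G *v b = complex_of_real ld *s b"
    and a: "normalized a" and ab: "cinner b a = 0" and equi: "\<And>j. cmod (a $ j) = cmod (b $ j)"
    and \<omega>: "cmod \<omega> = 1" and nz: "\<And>j. a $ j \<noteq> 0 \<Longrightarrow> a $ j + \<omega> * b $ j \<noteq> 0"
  shows "diag_fisher G (outer (complex_of_real (1 / sqrt 2) *s (a + \<omega> *s b))
                             (complex_of_real (1 / sqrt 2) *s (a + \<omega> *s b))) = (l1 - ld)\<^sup>2"
proof -
  define \<psi> where "\<psi> = complex_of_real (1 / sqrt 2) *s (a + \<omega> *s b)"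
  define g where "g j = (l1 - ld)\<^sup>2 * ((cmod (a $ j))\<^sup>2 - Re (a $ j * cnj (\<omega> * b $ j)))" for j
  have p: "Re (outer \<psi> \<psi> $ j $ j) = (cmod (a $ j + \<omega> * b $ j))\<^sup>2 / 2" for j
    using outer_superposition_diag[of a "\<omega> *s b"] by (simp add: \<psi>_def)
  have "G *v (\<omega> *s b) = complex_of_real ld *s (\<omega> *s b)"
    by (simp add: matrix_vector_mult_smult Gb mult.commute)
  from liouvillian_superposition_diag[OF hG Ga this]
  have dp: "Re (liouvillian G (outer \<psi> \<psi>) $ j $ j) = (l1 - ld) * Im (a $ j * cnj (\<omega> * b $ j))" for j
    by (simp add: \<psi>_def)
  have "cmod (a $ j) = cmod (\<omega> * b $ j)" for j using equi[of j] \<omega> by (simp add: norm_mult)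
  then have "Re (outer \<psi> \<psi> $ j $ j) * (Re (liouvillian G (outer \<psi> \<psi>) $ j $ j) / Re (outer \<psi> \<psi> $ j $ j))\<^sup>2
      = g j" if "0 < Re (outer \<psi> \<psi> $ j $ j)" for j
    using that unfolding p dp g_def by (rule equal_modulus_fisher_term)
  then have "diag_fisher G (outer \<psi> \<psi>) = (\<Sum>j\<in>{j. 0 < Re (outer \<psi> \<psi> $ j $ j)}. g j)"
    unfolding diag_fisher_def by (intro sum.cong) auto
  also have "\<dots> = (\<Sum>j\<in>UNIV. g j)"
  proof (rule sum.mono_neutral_left)
    have "g j = 0" if "\<not> 0 < Re (outer \<psi> \<psi> $ j $ j)" for j
    proof -
      have "a $ j + \<omega> * b $ j = 0" using that unfolding p by simp
      then have "a $ j = 0" using nz[of j] by blast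
      then show ?thesis by (simp add: g_def)
    qed
    then show "\<forall>j\<in>UNIV - {j. 0 < Re (outer \<psi> \<psi> $ j $ j)}. g j = 0" by blast
  qed auto
  also have "\<dots> = (l1 - ld)\<^sup>2 * (Re (cinner a a) - Re (cnj \<omega> * cinner b a))"
    unfolding g_def sum_distrib_left[symmetric] sum_subtractf cinner_self_Re Re_sum[symmetric]
    by (simp add: cinner_def sum_distrib_left mult_ac)
  also have "\<dots> = (l1 - ld)\<^sup>2"
    using a ab by (simp add: normalized_def)
  finally show ?thesis by (simp add: \<psi>_def)
qed

lemma exists_unimodular_notin:
  assumes "finite (F :: complex set)"
  obtains \<omega> where "cmod \<omega> = 1" "\<omega> \<notin> F"
proof -
  text \<open>The Cayley transform \<open>m \<mapsto> (m + i)/(m - i)\<close> embeds \<open>\<nat>\<close> into the unit circle.\<close>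
  define om where "om m = (of_nat m + \<i>) / (of_nat m - \<i>)" for m :: nat
  have nz: "(of_nat m - \<i> :: complex) \<noteq> 0" for m
    by (simp add: complex_eq_iff)
  have norm1: "cmod (om m) = 1" for m
  proof -
    have "cmod (of_nat m + \<i>) = cmod (of_nat m - \<i>)" by (simp add: cmod_def)
    then show ?thesis using nz[of m] by (simp add: om_def norm_divide)
  qed
  have "inj om"
  proof (rule injI)
    fix m m' assume "om m = om m'"
    then have "(of_nat m + \<i>) * (of_nat m' - \<i>) = (of_nat m' + \<i>) * (of_nat m - \<i> :: complex)"
      using nz[of m] nz[of m'] by (simp add: om_def divide_eq_eq field_simps)
    then have "2 * \<i> * (of_nat m - of_nat m') = (0::complex)" by (simp add: algebra_simps)
    then show "m = m'" by simp
  qed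
  then have "\<not> range om \<subseteq> F"
    using assms finite_subset finite_imageD by blast
  then show ?thesis using that norm1 by blast
qed

lemma exists_phase_nonvanishing_sum:
  fixes a b :: "'n::finite cvec"
  assumes equal: "\<And>j. cmod (a $ j) = cmod (b $ j)"
  obtains \<omega> where "cmod \<omega> = 1" "\<And>j. a $ j \<noteq> 0 \<Longrightarrow> a $ j + \<omega> * b $ j \<noteq> 0"
proof -
  obtain \<omega> where \<omega>: "cmod \<omega> = 1" and \<omega>_notin: "\<omega> \<notin> range (\<lambda>j. - (a $ j) / (b $ j))"
    using exists_unimodular_notin[of "range (\<lambda>j. - (a $ j) / (b $ j))"] by auto
  have "a $ j + \<omega> * b $ j \<noteq> 0" if "a $ j \<noteq> 0" for j
  proof
    assume "a $ j + \<omega> * b $ j = 0"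
    moreover have "b $ j \<noteq> 0" using that equal[of j] by auto
    ultimately have "\<omega> = - (a $ j) / (b $ j)" by (simp add: field_simps eq_neg_iff_add_eq_0)
    then show False using \<omega>_notin by auto
  qed
  then show ?thesis using that \<omega> by blast
qed

lemma exists_two_indices:
  assumes "2 \<le> CARD('n::finite)"
  obtains i0 i1 :: "'n::finite" where "i0 \<noteq> i1"
proof -
  have "\<not> (\<forall>i0 i1 :: 'n. i0 = i1)"
  proof
    assume "\<forall>i0 i1 :: 'n. i0 = i1"
    then have "UNIV = {undefined :: 'n}" by auto
    then have "CARD('n) = card {undefined :: 'n}" by (rule arg_cong)
    then show False using assms by simp
  qed
  then show ?thesis using that by blast
qed

lemma normalized_axis: "normalized (axis j 1 :: 'n::finite cvec)"
  by (simp add: normalized_def cinner_axis_left)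

lemma exists_equioriented_orthonormal_pair:
  assumes "2 \<le> CARD('n::finite)"
  obtains a b :: "'n::finite cvec" where "normalized a" "normalized b" "cinner b a = 0"
    "\<And>j. cmod (a $ j) = cmod (b $ j)"
proof -
  obtain i0 i1 :: "'n" where ne: "i0 \<noteq> i1" using exists_two_indices[OF assms] .
  define s where "s = complex_of_real (1 / sqrt 2)"
  define a where "a = s *s (axis i0 1 + 1 *s axis i1 1)"
  define b where "b = s *s (axis i0 1 + (- 1) *s axis i1 1)"
  have orth: "cinner (axis i1 1) (axis i0 1) = 0" "cinner (axis i0 1) (axis i1 1) = 0"
    using ne by (simp_all only: cinner_axis_left) (simp_all add: axis_def)
  have "normalized a" "normalized b"
    unfolding a_def b_def s_def
    by (rule normalized_superposition[OF normalized_axis normalized_axis orth(1)], simp)+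
  moreover have "cinner (axis i0 1 + (- 1) *s axis i1 1) (axis i0 1 + 1 *s axis i1 1) = 0"
    using orth normalized_axis[of i0] normalized_axis[of i1]
    by (simp add: cinner_add_left cinner_add_right cinner_diff_left normalized_def)
  then have "cinner b a = 0"
    by (simp only: a_def b_def cinner_scale_left cinner_scale_right) simp
  moreover have "cmod (a $ j) = cmod (b $ j)" for j
    using ne by (cases "j = i0"; cases "j = i1") (simp_all add: a_def b_def axis_def)
  ultimately show ?thesis using that by blast
qed

lemma orthonormal_pair_extend:
  fixes c d :: "'n::finite cvec"
  assumes "normalized c" "normalized d" "cinner c d = 0" "2 \<le> CARD('n)"
  obtains u where "orthonormal_upto CARD('n) u" "u 0 = c" "u 1 = d"
proof -
  define u0 where "u0 = (\<lambda>k::nat. if k = 0 then c else d)"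
  have "cinner d c = 0" using assms(3) cinner_cnj[of c d] by simp
  then have "orthonormal_upto 2 u0"
    using assms(1-3) by (auto simp: orthonormal_upto_def u0_def less_2_cases_iff)
  moreover have "eigenpairs_upto 0 2 u0 (\<lambda>_. 0)"
    by (simp add: eigenpairs_upto_def vec_eq_iff matrix_vector_mult_def)
  moreover have "hermitian (0 :: 'n cmat)" by (simp add: hermitian_def vec_eq_iff)
  ultimately show ?thesis
    using orthonormal_eigenbasis_extend[of 0 2 u0 "\<lambda>_. 0"] assms(4) that
    by (force simp: u0_def)
qed

lemma sum_outer_matrix_vector_mult: "(\<Sum>k<n. outer (u' k) (u k)) *v x = (\<Sum>k<n. cinner (u k) x *s u' k)"
  by (simp add: sum_matrix_vector_mult matrix_vector_mult_outer)

lemma sum_outer_mult_orthonormal: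
  assumes x: "orthonormal_upto CARD('n::finite) x"
  shows "(\<Sum>k<CARD('n). outer (y k) (x k)) ** (\<Sum>l<CARD('n). outer (x l) (z l))
    = (\<Sum>k<CARD('n). outer (y k) (z k) :: 'n cmat)"
proof (rule mat_eq_by_columns)
  fix j
  have "cinner (x k) (\<Sum>l<CARD('n). cinner (z l) (axis j 1) *s x l) = cinner (z k) (axis j 1)"
    if "k < CARD('n)" for k
    using x that
    by (simp add: cinner_sum_right cinner_scale_right orthonormal_upto_cinner if_distrib
        cong: if_cong)
  then show "((\<Sum>k<CARD('n). outer (y k) (x k)) ** (\<Sum>l<CARD('n). outer (x l) (z l))) *v axis j 1
      = (\<Sum>k<CARD('n). outer (y k) (z k)) *v axis j 1"
    by (simp add: matrix_vector_mul_assoc[symmetric] sum_outer_matrix_vector_mult)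
qed

lemma unitary_map_orthonormal_bases:
  fixes u u' :: "nat \<Rightarrow> 'n::finite cvec"
  assumes u: "orthonormal_upto CARD('n) u" and u': "orthonormal_upto CARD('n) u'"
  defines "V \<equiv> (\<Sum>k<CARD('n). outer (u' k) (u k))"
  shows "unitary V" and "\<And>j. j < CARD('n) \<Longrightarrow> V *v u j = u' j"
proof -
  have "adj (\<Sum>k\<in>K. outer (u' k) (u k)) = (\<Sum>k\<in>K. outer (u k) (u' k))" for K
    by (induct K rule: infinite_finite_induct) (auto simp: adj_add adj_outer)
  then show "unitary V"
    unfolding unitary_def V_def
    by (simp add: sum_outer_mult_orthonormal[OF u] sum_outer_mult_orthonormal[OF u']
        sum_outer_orthonormal_basis[OF u] sum_outer_orthonormal_basis[OF u'])
  show "V *v u j = u' j" if j: "j < CARD('n)" for j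
  proof -
    have "V *v u j = (\<Sum>k<CARD('n). if k = j then u' k else 0)"
      unfolding V_def sum_outer_matrix_vector_mult
      using u j by (intro sum.cong refl) (auto simp: orthonormal_upto_cinner)
    then show ?thesis using j by simp
  qed
qed

lemma exists_unitary_map_orthonormal_pairs:
  fixes a b c d :: "'n::finite cvec"
  assumes "normalized c" "normalized d" "cinner c d = 0"
    and "normalized a" "normalized b" "cinner a b = 0" and "2 \<le> CARD('n)"
  obtains V where "unitary V" "V *v c = a" "V *v d = b"
proof -
  obtain u where u: "orthonormal_upto CARD('n) u" "u 0 = c" "u 1 = d"
    using orthonormal_pair_extend[OF assms(1-3,7)] .
  obtain u' where u': "orthonormal_upto CARD('n) u'" "u' 0 = a" "u' 1 = b"
    using orthonormal_pair_extend[OF assms(4-7)] .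
  show ?thesis
    using that unitary_map_orthonormal_bases[OF u(1) u'(1)] u u' assms(7) by force
qed

lemma eigvec_add_unitary_conj:
  assumes Q: "unitary Q" and A: "A *v a = complex_of_real \<alpha> *s a"
    and B: "B *v c = complex_of_real \<beta> *s c" and Qc: "Q *v c = a"
  shows "(A + Q ** B ** adj Q) *v a = complex_of_real (\<alpha> + \<beta>) *s a"
proof -
  have "adj Q *v a = c" using unitary_adj_mvec[OF Q, of c] Qc by simp
  then have "(Q ** B ** adj Q) *v a = complex_of_real \<beta> *s a"
    by (simp add: matrix_vector_mul_assoc[symmetric] B matrix_vector_mult_smult Qc)
  then show ?thesis
    by (simp add: matrix_vector_mult_add_rdistrib A vector_sadd_rdistrib)
qed

lemma exists_equioriented_extremal_eigvecs:
  fixes A :: "'n::finite cmat"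
  assumes herm: "hermitian A" and n: "2 \<le> CARD('n)"
    and equi: "\<exists>v1 vd. normalized v1 \<and> normalized vd
       \<and> A *v v1 = complex_of_real (lambda_max A) *s v1
       \<and> A *v vd = complex_of_real (lambda_min A) *s vd
       \<and> (\<forall>j. cmod (v1 $ j) = cmod (vd $ j))"
  obtains a b where "normalized a" "normalized b" "cinner b a = 0" "\<And>j. cmod (a $ j) = cmod (b $ j)"
    "A *v a = complex_of_real (lambda_max A) *s a" "A *v b = complex_of_real (lambda_min A) *s b"
proof (cases "spectral_gap A = 0")
  case True
  text \<open>\<open>A\<close> is scalar, so any equioriented orthonormal pair will do.\<close>
  then have "lambda_min A = lambda_max A" by (simp add: spectral_gap_def)
  with that show ?thesis
    using exists_equioriented_orthonormal_pair[OF n] spectral_gap_eq_0_imp_scalar[OF herm True]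
    by metis
next
  case False
  then have "lambda_max A \<noteq> lambda_min A" by (simp add: spectral_gap_def)
  with equi that show ?thesis using hermitian_eigvecs_orthogonal[OF herm] by metis
qed

section \<open>Derivatives of matrix-valued functions\<close>

lemma has_vector_derivative_vec_lambda:
  fixes f :: "real \<Rightarrow> 'n::finite \<Rightarrow> 'a::euclidean_space"
  assumes "\<And>i. ((\<lambda>x. f x i) has_vector_derivative f' i) F"
  shows "((\<lambda>x. \<chi> i. f x i) has_vector_derivative (\<chi> i. f' i)) F"
proof -
  have axis: "bounded_linear (axis i :: 'a \<Rightarrow> 'a^'n)" for i
    by (intro linear_conv_bounded_linear[THEN iffD1] linearI) (simp_all add: vec_eq_iff axis_def)
  have sum: "(\<chi> i. v i) = (\<Sum>i\<in>UNIV. axis i (v i) :: 'a^'n)" for v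
    by (simp add: vec_eq_iff sum_component axis_def)
  show ?thesis
    unfolding sum by (intro has_vector_derivative_sum bounded_linear.has_vector_derivative[OF axis] assms)
qed

lemma bounded_bilinear_mmult: "bounded_bilinear (\<lambda>(A::'n::finite cmat) (B::'n cmat). A ** B)"
proof -
  have "bilinear (\<lambda>(A::'n::finite cmat) (B::'n cmat). A ** B)"
    unfolding bilinear_def
    by (auto intro!: linearI simp: matrix_add_ldistrib vec_eq_iff matrix_matrix_mult_def
        scaleR_vec_nth scaleR_mat_nth scaleR_sum_right sum_distrib_left sum.distrib distrib_left distrib_right
        mult_ac)
  then show ?thesis by (simp add: bilinear_conv_bounded_bilinear)
qed

lemma bounded_bilinear_mvec: "bounded_bilinear (\<lambda>(A::'n::finite cmat) (v::'n cvec). A *v v)"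
proof -
  have "bilinear (\<lambda>(A::'n::finite cmat) (v::'n cvec). A *v v)"
    unfolding bilinear_def
    by (auto intro!: linearI simp: matrix_vector_mult_add_rdistrib matrix_vector_right_distrib vec_eq_iff
        matrix_vector_mult_def scaleR_vec_nth scaleR_mat_nth scaleR_sum_right sum_distrib_left sum.distrib
        distrib_left distrib_right mult_ac)
  then show ?thesis by (simp add: bilinear_conv_bounded_bilinear)
qed

lemma bounded_bilinear_cinner: "bounded_bilinear (\<lambda>(u::'n::finite cvec) (v::'n cvec). cinner u v)"
proof -
  have "bilinear (\<lambda>(u::'n::finite cvec) (v::'n cvec). cinner u v)"
    unfolding bilinear_def
    by (auto intro!: linearI simp: cinner_add_left cinner_add_right cinner_def
        scaleR_vec_nth scaleR_mat_nth scaleR_sum_right sum_distrib_left sum.distrib distrib_left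
        distrib_right mult_ac)
  then show ?thesis by (simp add: bilinear_conv_bounded_bilinear)
qed

lemma bounded_linear_adj: "bounded_linear (adj :: 'n::finite cmat \<Rightarrow> 'n cmat)"
  by (intro linear_conv_bounded_linear[THEN iffD1] linearI) (simp_all add: adj_add adj_scaleR)

lemma bounded_linear_Re_diag: "bounded_linear (\<lambda>M::'n::finite cmat. Re (M $ j $ j))"
  by (intro linear_conv_bounded_linear[THEN iffD1] linearI) simp_all

lemma has_vector_derivative_mmult:
  fixes A B :: "real \<Rightarrow> 'n::finite cmat"
  shows "(A has_vector_derivative A') (at x) \<Longrightarrow> (B has_vector_derivative B') (at x) \<Longrightarrow>
   ((\<lambda>x. A x ** B x) has_vector_derivative (A x ** B' + A' ** B x)) (at x)"
  using bounded_bilinear.has_vector_derivative[OF bounded_bilinear_mmult, of A A' x UNIV B B'] by simp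

lemma has_vector_derivative_mvec:
  fixes A :: "real \<Rightarrow> 'n::finite cmat" and v :: "real \<Rightarrow> 'n cvec"
  shows "(A has_vector_derivative A') (at x) \<Longrightarrow> (v has_vector_derivative v') (at x) \<Longrightarrow>
   ((\<lambda>x. A x *v v x) has_vector_derivative (A x *v v' + A' *v v x)) (at x)"
  using bounded_bilinear.has_vector_derivative[OF bounded_bilinear_mvec, of A A' x UNIV v v'] by simp

lemma has_vector_derivative_cinner:
  fixes u v :: "real \<Rightarrow> 'n::finite cvec"
  shows "(u has_vector_derivative u') (at x) \<Longrightarrow> (v has_vector_derivative v') (at x) \<Longrightarrow>
   ((\<lambda>x. cinner (u x) (v x)) has_vector_derivative (cinner (u x) v' + cinner u' (v x))) (at x)"
  using bounded_bilinear.has_vector_derivative[OF bounded_bilinear_cinner, of u u' x UNIV v v'] by simp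

lemma has_vector_derivative_adj:
  fixes A :: "real \<Rightarrow> 'n::finite cmat"
  shows "(A has_vector_derivative A') (at x) \<Longrightarrow> ((\<lambda>x. adj (A x)) has_vector_derivative adj A') (at x)"
  by (rule bounded_linear.has_vector_derivative[OF bounded_linear_adj])

lemma bounded_linear_sandwich:
  fixes A B :: "'n::finite cmat"
  shows "bounded_linear (\<lambda>M::'n cmat. A ** M ** B)"
proof -
  have "bounded_linear (\<lambda>M::'n cmat. M ** B)"
    using bounded_bilinear.bounded_linear_left[OF bounded_bilinear_mmult, of B] by simp
  moreover have "bounded_linear (\<lambda>M::'n cmat. A ** M)"
    using bounded_bilinear.bounded_linear_right[OF bounded_bilinear_mmult, of A] by simp
  ultimately show ?thesis using bounded_linear_compose by (fastforce simp: o_def)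
qed

section \<open>Diagonal matrices and the matrix exponential\<close>

definition diag_mat :: "('n::finite \<Rightarrow> complex) \<Rightarrow> 'n cmat" where
  "diag_mat f = (\<chi> i j. if i = j then f i else 0)"

lemma diag_mat_mult:
  fixes f g :: "'n::finite \<Rightarrow> complex"
  shows "diag_mat f ** diag_mat g = diag_mat (\<lambda>j. f j * g j)"
proof -
  have "(\<Sum>k\<in>UNIV. (if i = k then f i else 0) * (if k = j then g k else 0))
      = (\<Sum>k\<in>UNIV. if k = i then (if i = j then f i * g j else 0) else 0)" for i j :: 'n
    by (rule sum.cong) auto
  then show ?thesis by (simp add: vec_eq_iff diag_mat_def matrix_matrix_mult_def)
qed

lemma diag_mat_one: "diag_mat (\<lambda>j. 1) = mat 1"
  by (simp add: vec_eq_iff diag_mat_def mat_def)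

lemma cscale_diag_mat: "cscale c (diag_mat f) = diag_mat (\<lambda>j. c * f j)"
  by (simp add: vec_eq_iff diag_mat_def)

lemma adj_diag_mat: "adj (diag_mat f) = diag_mat (\<lambda>j. cnj (f j))"
  by (simp add: vec_eq_iff diag_mat_def)

lemma diag_mat_axis: "diag_mat f *v axis j 1 = f j *s axis j 1"
  unfolding matrix_vector_mult_axis by (simp add: vec_eq_iff diag_mat_def axis_def)

lemma unitary_diag_mat: "(\<And>j. cmod (f j) = 1) \<Longrightarrow> unitary (diag_mat f)"
  by (simp add: unitary_def adj_diag_mat diag_mat_mult diag_mat_one cnj_mult_self mult_cnj_self)

lemma diag_mat_exp_sums: "(\<lambda>k. inverse (fact k) *\<^sub>R diag_mat (\<lambda>j. z j ^ k)) sums diag_mat (\<lambda>j. exp (z j))"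
proof -
  have "(\<Sum>k<n. inverse (fact k) *\<^sub>R diag_mat (\<lambda>j. z j ^ k))
      = (\<chi> i j. if i = j then (\<Sum>k<n. z j ^ k /\<^sub>R fact k) else 0)" for n
    by (simp add: vec_eq_iff sum_component diag_mat_def)
  moreover have "(\<lambda>n. \<chi> i j. if i = j then (\<Sum>k<n. z j ^ k /\<^sub>R fact k) else 0) \<longlonglongrightarrow> diag_mat (\<lambda>j. exp (z j))"
    unfolding diag_mat_def
    using exp_converges by (intro tendsto_vec_lambda) (auto simp: sums_def)
  ultimately show ?thesis by (simp add: sums_def)
qed

lemma has_vector_derivative_diag_mat:
  assumes "\<And>j. ((\<lambda>y. f y j) has_vector_derivative f' j) (at x)"
  shows "((\<lambda>y. diag_mat (f y)) has_vector_derivative diag_mat f') (at x)"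
  unfolding diag_mat_def
  using assms by (intro has_vector_derivative_vec_lambda) (simp add: has_vector_derivative_const)

section \<open>Generators of unitary families\<close>

lemma gen_eq:
  assumes "(F has_vector_derivative F') (at x)"
  shows "gen F x = cscale \<i> (F' ** adj (F x))"
  using vector_derivative_at[OF assms] by (simp add: gen_def)

text \<open>Differentiating \<open>F F\<^sup>\<dagger> = 1\<close> shows that \<open>F' F\<^sup>\<dagger>\<close> is anti-Hermitian.\<close>

lemma hermitian_gen:
  fixes F :: "real \<Rightarrow> 'n::finite cmat"
  assumes U: "\<And>y. unitary (F y)" and d: "(F has_vector_derivative F') (at x)"
  shows "hermitian (gen F x)"
proof -
  have "((\<lambda>y. F y ** adj (F y)) has_vector_derivative (F x ** adj F' + F' ** adj (F x))) (at x)"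
    by (intro has_vector_derivative_mmult has_vector_derivative_adj d)
  moreover have "(\<lambda>y. F y ** adj (F y)) = (\<lambda>y. mat 1)"
    using U by (simp add: unitary_def)
  ultimately have "F x ** adj F' + F' ** adj (F x) = 0"
    using vector_derivative_unique_at has_vector_derivative_const by metis
  then have "adj (F' ** adj (F x)) = - (F' ** adj (F x))"
    by (simp add: adj_mult eq_neg_iff_add_eq_0 add.commute)
  then show ?thesis
    unfolding gen_eq[OF d] hermitian_def adj_cscale by (simp add: vec_eq_iff)
qed

lemma gen_mult_const_mult:
  fixes S U :: "real \<Rightarrow> 'n::finite cmat"
  assumes UU: "unitary (U x)" and VU: "unitary V"
    and dS: "(S has_vector_derivative S') (at x)" and dU: "(U has_vector_derivative U') (at x)"
  shows "((\<lambda>y. S y ** V ** U y) has_vector_derivative (S x ** V ** U' + S' ** V ** U x)) (at x)"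
    and "gen (\<lambda>y. S y ** V ** U y) x = gen S x + (S x ** V) ** gen U x ** adj (S x ** V)"
proof -
  have "((\<lambda>y. S y ** (V ** U y)) has_vector_derivative (S x ** (V ** U' + 0 ** U x) + S' ** (V ** U x))) (at x)"
    by (intro has_vector_derivative_mmult has_vector_derivative_const dS dU)
  then show d: "((\<lambda>y. S y ** V ** U y) has_vector_derivative (S x ** V ** U' + S' ** V ** U x)) (at x)"
    by (simp add: matrix_mul_assoc)
  have "(S' ** V ** U x) ** adj (S x ** V ** U x) = S' ** (V ** (U x ** adj (U x)) ** adj V) ** adj (S x)"
    by (simp add: adj_mult matrix_mul_assoc)
  also have "\<dots> = S' ** adj (S x)" using UU VU by (simp add: unitary_def)
  finally have 1: "(S' ** V ** U x) ** adj (S x ** V ** U x) = S' ** adj (S x)" .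
  have 2: "(S x ** V ** U') ** adj (S x ** V ** U x) = (S x ** V) ** (U' ** adj (U x)) ** adj (S x ** V)"
    by (simp add: adj_mult matrix_mul_assoc)
  show "gen (\<lambda>y. S y ** V ** U y) x = gen S x + (S x ** V) ** gen U x ** adj (S x ** V)"
    unfolding gen_eq[OF d] gen_eq[OF dS] gen_eq[OF dU]
    by (simp add: matrix_add_rdistrib 1 2 cscale_add cscale_mult_left cscale_mult_right add.commute)
qed

lemma has_real_derivative_unitary_conj_diag:
  fixes W :: "real \<Rightarrow> 'n::finite cmat"
  assumes dW: "(W has_vector_derivative W') (at x)" and WU: "unitary (W x)"
    and hG: "hermitian (gen W x)"
  shows "((\<lambda>y. Re ((W y ** \<rho>0 ** adj (W y)) $ j $ j)) has_real_derivative
           Re (liouvillian (gen W x) (W x ** \<rho>0 ** adj (W x)) $ j $ j)) (at x)"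
proof -
  define G where "G = gen W x"
  have W': "W' = cscale (- \<i>) G ** W x"
    using WU by (simp add: G_def gen_eq[OF dW] cscale_cscale cscale_mult_left
        matrix_mul_assoc[symmetric] unitary_def)
  then have adjW': "adj W' = adj (W x) ** cscale \<i> G"
    using hG by (simp add: G_def adj_mult adj_cscale hermitian_def)
  define \<rho> where "\<rho> = W x ** \<rho>0 ** adj (W x)"
  have e1: "W x ** \<rho>0 ** adj W' = cscale \<i> (\<rho> ** G)"
    by (simp add: adjW' \<rho>_def cscale_mult_right matrix_mul_assoc)
  have e2: "W' ** \<rho>0 ** adj (W x) = cscale (- \<i>) (G ** \<rho>)"
    by (simp add: W' \<rho>_def cscale_mult_left matrix_mul_assoc)
  have "((\<lambda>y. W y ** \<rho>0 ** adj (W y)) has_vector_derivative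
        (W x ** \<rho>0 ** adj W' + (W x ** 0 + W' ** \<rho>0) ** adj (W x))) (at x)"
    by (intro has_vector_derivative_mmult has_vector_derivative_adj dW has_vector_derivative_const)
  also have "W x ** \<rho>0 ** adj W' + (W x ** 0 + W' ** \<rho>0) ** adj (W x) = liouvillian G \<rho>"
    using e1 e2 by (simp add: liouvillian_def matrix_mul_assoc add.commute)
  finally show ?thesis
    using bounded_linear.has_vector_derivative[OF bounded_linear_Re_diag]
    by (simp add: G_def \<rho>_def has_real_derivative_iff_has_vector_derivative)
qed

section \<open>The controlled energy measurement\<close>

locale smooth_eigenbasis =
  fixes H :: "real \<Rightarrow> 'n::finite cmat"
    and E :: "real \<Rightarrow> 'n \<Rightarrow> real"
    and Ev :: "real \<Rightarrow> 'n \<Rightarrow> 'n cvec"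
    and S :: "real \<Rightarrow> 'n cmat"
  assumes H_differentiable: "\<And>x. H differentiable (at x)"
    and H_Ev: "\<And>x j. H x *v Ev x j = complex_of_real (E x j) *s Ev x j"
    and normalized_Ev: "\<And>x j. normalized (Ev x j)"
    and Ev_differentiable: "\<And>x j. (\<lambda>y. Ev y j) differentiable (at x)"
    and unitary_S: "\<And>x. unitary (S x)"
    and S_Ev: "\<And>x j. S x *v Ev x j = axis j 1"
begin

lemma adj_S_axis: "adj (S x) *v axis j 1 = Ev x j"
  using unitary_adj_mvec[OF unitary_S[of x], of "Ev x j"] S_Ev by simp

lemma S_eq: "S = (\<lambda>x. \<chi> j i. cnj (Ev x j $ i))"
proof -
  have "adj (S x) $ i $ j = Ev x j $ i" for x i j
    using arg_cong[OF adj_S_axis[of x j], of "\<lambda>v. v $ i"] by (simp add: matrix_vector_mult_axis)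
  then have "S x $ j $ i = cnj (Ev x j $ i)" for x i j
    by (metis adj_nth complex_cnj_cnj)
  then show ?thesis by (intro ext) (simp add: vec_eq_iff)
qed

lemma S_has_vector_derivative: "(S has_vector_derivative vector_derivative S (at x)) (at x)"
proof -
  have cnj_nth: "bounded_linear (\<lambda>v::'n cvec. cnj (v $ i))" for i
    using bounded_linear_compose[OF bounded_linear_cnj bounded_linear_vec_nth[of i]] by (simp add: o_def)
  have "((\<lambda>y. Ev y j) has_vector_derivative vector_derivative (\<lambda>y. Ev y j) (at x)) (at x)" for j
    using Ev_differentiable vector_derivative_works by blast
  then have "((\<lambda>y. \<chi> j i. cnj (Ev y j $ i)) has_vector_derivative
      (\<chi> j i. cnj (vector_derivative (\<lambda>y. Ev y j) (at x) $ i))) (at x)"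
    by (intro has_vector_derivative_vec_lambda bounded_linear.has_vector_derivative[OF cnj_nth])
  then have "S differentiable (at x)" unfolding S_eq by (rule differentiableI_vector)
  then show ?thesis by (rule vector_derivative_works[THEN iffD1])
qed

lemma H_eq_diag: "H x = adj (S x) ** diag_mat (\<lambda>j. complex_of_real (E x j)) ** S x"
proof -
  have "H x ** adj (S x) = adj (S x) ** diag_mat (\<lambda>j. complex_of_real (E x j))"
    by (rule mat_eq_by_columns) (simp add: matrix_vector_mul_assoc[symmetric] adj_S_axis H_Ev
        diag_mat_axis matrix_vector_mult_smult)
  then have "H x ** (adj (S x) ** S x) = adj (S x) ** diag_mat (\<lambda>j. complex_of_real (E x j)) ** S x"
    by (simp add: matrix_mul_assoc)
  then show ?thesis using unitary_S[of x] by (simp add: unitary_def)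
qed

lemma mpow_cscale_H:
  "mpow (cscale c (H x)) k = adj (S x) ** diag_mat (\<lambda>j. (c * complex_of_real (E x j)) ^ k) ** S x"
proof (induction k)
  case 0
  then show ?case using unitary_S[of x] by (simp add: diag_mat_one unitary_def)
next
  case (Suc k)
  have "cscale c (H x) = adj (S x) ** cscale c (diag_mat (\<lambda>j. complex_of_real (E x j))) ** S x"
    by (simp add: cscale_mult_left cscale_mult_right flip: H_eq_diag)
  then have cH: "cscale c (H x) = adj (S x) ** diag_mat (\<lambda>j. c * complex_of_real (E x j)) ** S x"
    by (simp add: cscale_diag_mat)
  show ?case
    unfolding mpow.simps Suc.IH unfolding cH
    by (simp add: unitary_conj_mult[OF unitary_S] diag_mat_mult)
qed

lemma evol_eq_diag:
  "evol t H x = adj (S x) ** diag_mat (\<lambda>j. exp (- \<i> * complex_of_real t * complex_of_real (E x j))) ** S x"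
proof -
  have "(\<lambda>k. adj (S x) ** (inverse (fact k) *\<^sub>R diag_mat (\<lambda>j. (- \<i> * complex_of_real t * complex_of_real (E x j)) ^ k)) ** S x)
      sums (adj (S x) ** diag_mat (\<lambda>j. exp (- \<i> * complex_of_real t * complex_of_real (E x j))) ** S x)"
    by (rule bounded_linear.sums[OF bounded_linear_sandwich diag_mat_exp_sums])
  moreover have "adj (S x) ** (r *\<^sub>R M) ** S x = r *\<^sub>R (adj (S x) ** M ** S x)" for r M
    by (simp add: scaleR_eq_cscale cscale_mult_left cscale_mult_right)
  ultimately have "(\<lambda>k. inverse (fact k) *\<^sub>R mpow (cscale (- \<i> * complex_of_real t) (H x)) k)
      sums (adj (S x) ** diag_mat (\<lambda>j. exp (- \<i> * complex_of_real t * complex_of_real (E x j))) ** S x)"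
    by (simp only: mpow_cscale_H mult.assoc)
  then show ?thesis by (simp add: evol_def mexp_def sums_unique[symmetric])
qed

lemma E_has_real_derivative:
  "((\<lambda>y. E y j) has_real_derivative vector_derivative (\<lambda>y. E y j) (at x)) (at x)"
proof -
  have E: "(\<lambda>y. E y j) = (\<lambda>y. Re (cinner (Ev y j) (H y *v Ev y j)))"
    using normalized_Ev by (simp add: H_Ev cinner_scale_right normalized_def)
  have "((\<lambda>y. cinner (Ev y j) (H y *v Ev y j)) has_vector_derivative
      cinner (Ev x j) (H x *v vector_derivative (\<lambda>y. Ev y j) (at x) + vector_derivative H (at x) *v Ev x j)
       + cinner (vector_derivative (\<lambda>y. Ev y j) (at x)) (H x *v Ev x j)) (at x)"
    using H_differentiable[THEN vector_derivative_works[THEN iffD1]]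
      Ev_differentiable[THEN vector_derivative_works[THEN iffD1]]
    by (intro has_vector_derivative_cinner has_vector_derivative_mvec)
  from bounded_linear.has_vector_derivative[OF bounded_linear_Re this]
  have "(\<lambda>y. E y j) differentiable (at x)"
    unfolding E by (rule differentiableI_vector)
  then show ?thesis
    by (simp only: vector_derivative_works has_real_derivative_iff_has_vector_derivative)
qed

lemma evol_has_vector_derivative:
  "(evol t H has_vector_derivative vector_derivative (evol t H) (at x)) (at x)"
proof -
  define c where "c = - \<i> * complex_of_real t"
  have "((\<lambda>y. exp (c * complex_of_real (E y j))) has_vector_derivative
      c * complex_of_real (vector_derivative (\<lambda>y. E y j) (at x)) * exp (c * complex_of_real (E x j)))
      (at x)" for j
  proof -
    have "((\<lambda>y. c * complex_of_real (E y j)) has_vector_derivative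
        c * complex_of_real (vector_derivative (\<lambda>y. E y j) (at x))) (at x)"
      by (intro has_vector_derivative_mult_right has_vector_derivative_of_real E_has_real_derivative)
    from field_vector_diff_chain_at[OF this DERIV_exp] show ?thesis by (simp add: o_def)
  qed
  then have "((\<lambda>y. diag_mat (\<lambda>j. exp (c * complex_of_real (E y j)))) has_vector_derivative
      diag_mat (\<lambda>j. c * complex_of_real (vector_derivative (\<lambda>y. E y j) (at x))
        * exp (c * complex_of_real (E x j)))) (at x)"
    by (rule has_vector_derivative_diag_mat)
  from has_vector_derivative_mmult[OF has_vector_derivative_mmult[OF
        has_vector_derivative_adj[OF S_has_vector_derivative] this] S_has_vector_derivative]
  have "evol t H differentiable (at x)"
    unfolding evol_eq_diag[abs_def] c_def by (rule differentiableI_vector)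
  then show ?thesis by (rule vector_derivative_works[THEN iffD1])
qed

lemma unitary_evol: "unitary (evol t H x)"
  by (simp add: evol_eq_diag unitary_mult unitary_adj unitary_S unitary_diag_mat norm_mult)

lemma hermitian_gen_S: "hermitian (gen S x)"
  by (rule hermitian_gen[OF unitary_S S_has_vector_derivative])

lemma hermitian_gen_evol: "hermitian (gen (evol t H) x)"
  by (rule hermitian_gen[OF unitary_evol evol_has_vector_derivative])

definition frame :: "real \<Rightarrow> 'n cmat \<Rightarrow> real \<Rightarrow> 'n cmat" where
  "frame t V y = S y ** V ** evol t H y"

lemma unitary_frame: "unitary V \<Longrightarrow> unitary (frame t V y)"
  by (simp add: frame_def unitary_mult unitary_S unitary_evol)

lemma frame_has_vector_derivative:
  "unitary V \<Longrightarrow> (frame t V has_vector_derivative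
     S x ** V ** vector_derivative (evol t H) (at x) + vector_derivative S (at x) ** V ** evol t H x) (at x)"
  unfolding frame_def[abs_def]
  by (rule gen_mult_const_mult(1)[OF unitary_evol _ S_has_vector_derivative evol_has_vector_derivative])

lemma gen_frame:
  "unitary V \<Longrightarrow> gen (frame t V) x = gen S x + (S x ** V) ** gen (evol t H) x ** adj (S x ** V)"
  unfolding frame_def[abs_def]
  by (rule gen_mult_const_mult(2)[OF unitary_evol _ S_has_vector_derivative evol_has_vector_derivative])

lemma hermitian_gen_frame: "unitary V \<Longrightarrow> hermitian (gen (frame t V) x)"
  by (rule hermitian_gen[OF unitary_frame frame_has_vector_derivative])

lemma outcome_prob_eq:
  "outcome_prob U Ev \<rho>0 V j x = Re ((S x ** V ** U x ** \<rho>0 ** adj (S x ** V ** U x)) $ j $ j)"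
proof -
  let ?P = "outer (axis j 1) (axis j 1) :: 'n cmat"
  have "outer (Ev x j) (Ev x j) = adj (S x) ** ?P ** S x"
    using outer_matrix_vector_mult[of "adj (S x)" "axis j 1"] by (simp add: adj_S_axis)
  then have "mtrace ((U x ** \<rho>0 ** adj (U x)) ** (adj V ** outer (Ev x j) (Ev x j) ** V))
      = mtrace ((U x ** \<rho>0 ** adj (U x) ** adj V ** adj (S x) ** ?P) ** (S x ** V))"
    by (simp add: matrix_mul_assoc)
  also have "\<dots> = mtrace ((S x ** V ** U x ** \<rho>0 ** adj (S x ** V ** U x)) ** ?P)"
    by (subst mtrace_comm) (simp add: adj_mult matrix_mul_assoc)
  finally show ?thesis
    by (simp add: outcome_prob_def mtrace_mult_outer cinner_axis_mvec_axis)
qed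

lemma fisher_info_eq_diag_fisher:
  assumes V: "unitary V"
  shows "fisher_info (evol t H) Ev \<rho>0 V \<xi>
    = diag_fisher (gen (frame t V) \<xi>) (frame t V \<xi> ** \<rho>0 ** adj (frame t V \<xi>))"
proof -
  define p where "p j y = Re ((frame t V y ** \<rho>0 ** adj (frame t V y)) $ j $ j)" for j y
  define \<rho> where "\<rho> = frame t V \<xi> ** \<rho>0 ** adj (frame t V \<xi>)"
  define p' where "p' j = Re (liouvillian (gen (frame t V) \<xi>) \<rho> $ j $ j)" for j
  have "outcome_prob (evol t H) Ev \<rho>0 V j = p j" for j
    by (simp add: fun_eq_iff outcome_prob_eq p_def frame_def)
  moreover have "deriv (\<lambda>y. ln (p j y)) \<xi> = p' j / p j \<xi>" if "0 < p j \<xi>" for j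
  proof -
    have "(p j has_real_derivative p' j) (at \<xi>)"
      unfolding p_def p'_def \<rho>_def
      by (rule has_real_derivative_unitary_conj_diag[OF frame_has_vector_derivative[OF V]
            unitary_frame[OF V] hermitian_gen_frame[OF V]])
    from DERIV_chain2[OF DERIV_ln_divide[OF that] this] show ?thesis
      by (simp add: DERIV_imp_deriv)
  qed
  ultimately have "fisher_info (evol t H) Ev \<rho>0 V \<xi> = (\<Sum>j\<in>{j. 0 < p j \<xi>}. p j \<xi> * (p' j / p j \<xi>)\<^sup>2)"
    unfolding fisher_info_def by (intro sum.cong) auto
  then show ?thesis by (simp add: diag_fisher_def p_def p'_def \<rho>_def)
qed

lemma fisher_info_le_gap_sum_sq:
  assumes \<rho>0: "density_matrix \<rho>0" and V: "unitary V"
  shows "fisher_info (evol t H) Ev \<rho>0 V \<xi>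
    \<le> (spectral_gap (gen (evol t H) \<xi>) + spectral_gap (gen S \<xi>))\<^sup>2"
proof -
  have "fisher_info (evol t H) Ev \<rho>0 V \<xi> \<le> (spectral_gap (gen (frame t V) \<xi>))\<^sup>2"
    unfolding fisher_info_eq_diag_fisher[OF V]
    by (intro diag_fisher_le_spectral_gap_sq hermitian_gen_frame V
        density_matrix_unitary_conj \<rho>0 unitary_frame)
  also have "\<dots> \<le> (spectral_gap (gen (evol t H) \<xi>) + spectral_gap (gen S \<xi>))\<^sup>2"
  proof (rule power_mono)
    have "spectral_gap (gen (frame t V) \<xi>)
        \<le> spectral_gap (gen S \<xi>) + spectral_gap ((S \<xi> ** V) ** gen (evol t H) \<xi> ** adj (S \<xi> ** V))"
      unfolding gen_frame[OF V]
      by (rule spectral_gap_add_le[OF hermitian_gen_S hermitian_unitary_conj[OF hermitian_gen_evol]])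
    also have "spectral_gap ((S \<xi> ** V) ** gen (evol t H) \<xi> ** adj (S \<xi> ** V)) = spectral_gap (gen (evol t H) \<xi>)"
      by (rule spectral_gap_unitary_conj[OF unitary_mult[OF unitary_S V]])
    finally show "spectral_gap (gen (frame t V) \<xi>) \<le> spectral_gap (gen (evol t H) \<xi>) + spectral_gap (gen S \<xi>)"
      by simp
    show "0 \<le> spectral_gap (gen (frame t V) \<xi>)"
      by (rule spectral_gap_nonneg[OF hermitian_gen_frame[OF V]])
  qed
  finally show ?thesis .
qed

lemma exists_frame_extremal_eigvecs:
  fixes t :: real
  assumes n: "2 \<le> CARD('n)"
    and equi: "\<exists>v1 vd. normalized v1 \<and> normalized vd
       \<and> gen S \<xi> *v v1 = complex_of_real (lambda_max (gen S \<xi>)) *s v1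
       \<and> gen S \<xi> *v vd = complex_of_real (lambda_min (gen S \<xi>)) *s vd
       \<and> (\<forall>j. cmod (v1 $ j) = cmod (vd $ j))"
  obtains V a b where "unitary V" "normalized a" "cinner b a = 0" "\<And>j. cmod (a $ j) = cmod (b $ j)"
    "gen (frame t V) \<xi> *v a
       = complex_of_real (lambda_max (gen S \<xi>) + lambda_max (gen (evol t H) \<xi>)) *s a"
    "gen (frame t V) \<xi> *v b
       = complex_of_real (lambda_min (gen S \<xi>) + lambda_min (gen (evol t H) \<xi>)) *s b"
proof -
  obtain a b where a: "normalized a" and b: "normalized b" and ab: "cinner b a = 0"
    and equal: "\<And>j. cmod (a $ j) = cmod (b $ j)"
    and Sa: "gen S \<xi> *v a = complex_of_real (lambda_max (gen S \<xi>)) *s a"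
    and Sb: "gen S \<xi> *v b = complex_of_real (lambda_min (gen S \<xi>)) *s b"
    using exists_equioriented_extremal_eigvecs[OF hermitian_gen_S n equi] by blast
  obtain c d where c: "normalized c" and d: "normalized d" and cd: "cinner c d = 0"
    and Uc: "gen (evol t H) \<xi> *v c = complex_of_real (lambda_max (gen (evol t H) \<xi>)) *s c"
    and Ud: "gen (evol t H) \<xi> *v d = complex_of_real (lambda_min (gen (evol t H) \<xi>)) *s d"
    using exists_orthonormal_extremal_eigvecs[OF hermitian_gen_evol n] by blast
  have S': "unitary (adj (S \<xi>))" by (rule unitary_adj[OF unitary_S])
  have "cinner (adj (S \<xi>) *v a) (adj (S \<xi>) *v b) = 0"
    using ab unitary_cinner[OF S', of a b] cinner_cnj[of b a] by simp
  then obtain V where V: "unitary V"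
    and Vc: "V *v c = adj (S \<xi>) *v a" and Vd: "V *v d = adj (S \<xi>) *v b"
    using exists_unitary_map_orthonormal_pairs[OF c d cd _ _ _ n] a b unitary_cinner[OF S']
    by (metis normalized_def)
  have Q: "unitary (S \<xi> ** V)" by (rule unitary_mult[OF unitary_S V])
  have Qc: "(S \<xi> ** V) *v c = a" and Qd: "(S \<xi> ** V) *v d = b"
    using Vc Vd unitary_mvec_adj[OF unitary_S] by (simp_all flip: matrix_vector_mul_assoc)
  have "gen (frame t V) \<xi> *v a
      = complex_of_real (lambda_max (gen S \<xi>) + lambda_max (gen (evol t H) \<xi>)) *s a"
    unfolding gen_frame[OF V] by (rule eigvec_add_unitary_conj[OF Q Sa Uc Qc])
  moreover have "gen (frame t V) \<xi> *v b
      = complex_of_real (lambda_min (gen S \<xi>) + lambda_min (gen (evol t H) \<xi>)) *s b"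
    unfolding gen_frame[OF V] by (rule eigvec_add_unitary_conj[OF Q Sb Ud Qd])
  ultimately show ?thesis using that V a ab equal by blast
qed

lemma fisher_info_pulled_back_pure_state:
  fixes t \<xi> :: real
  assumes V: "unitary V" and \<psi>: "normalized \<psi>"
  defines "\<rho>0 \<equiv> adj (frame t V \<xi>) ** outer \<psi> \<psi> ** frame t V \<xi>"
  shows "density_matrix \<rho>0"
    and "fisher_info (evol t H) Ev \<rho>0 V \<xi> = diag_fisher (gen (frame t V) \<xi>) (outer \<psi> \<psi>)"
proof -
  have W: "unitary (frame t V \<xi>)" by (rule unitary_frame[OF V])
  show "density_matrix \<rho>0"
    unfolding \<rho>0_def using density_matrix_unitary_conj[OF density_matrix_outer[OF \<psi>] unitary_adj[OF W]]
    by simp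
  have "frame t V \<xi> ** \<rho>0 ** adj (frame t V \<xi>) = outer \<psi> \<psi>"
    using W by (simp add: \<rho>0_def matrix_mul_assoc unitary_def) (simp flip: matrix_mul_assoc)
  then show "fisher_info (evol t H) Ev \<rho>0 V \<xi> = diag_fisher (gen (frame t V) \<xi>) (outer \<psi> \<psi>)"
    by (simp add: fisher_info_eq_diag_fisher[OF V])
qed

lemma gap_sum_sq_attained:
  assumes equi: "\<exists>v1 vd. normalized v1 \<and> normalized vd
       \<and> gen S \<xi> *v v1 = complex_of_real (lambda_max (gen S \<xi>)) *s v1
       \<and> gen S \<xi> *v vd = complex_of_real (lambda_min (gen S \<xi>)) *s vd
       \<and> (\<forall>j. cmod (v1 $ j) = cmod (vd $ j))"
  obtains \<rho>0 V where "density_matrix \<rho>0" "unitary V"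
    "fisher_info (evol t H) Ev \<rho>0 V \<xi> = (spectral_gap (gen (evol t H) \<xi>) + spectral_gap (gen S \<xi>))\<^sup>2"
proof (cases "spectral_gap (gen (evol t H) \<xi>) + spectral_gap (gen S \<xi>) = 0")
  case True
  text \<open>The upper bound is \<open>0\<close>, so any measurement attains it.\<close>
  define \<rho>0 where "\<rho>0 = outer (axis undefined 1) (axis undefined 1 :: 'n cvec)"
  have \<rho>0: "density_matrix \<rho>0" unfolding \<rho>0_def by (rule density_matrix_outer[OF normalized_axis])
  have V: "unitary (mat 1 :: 'n cmat)" by (simp add: unitary_def)
  have "0 \<le> fisher_info (evol t H) Ev \<rho>0 (mat 1) \<xi>"
    unfolding fisher_info_def by (intro sum_nonneg) auto
  with fisher_info_le_gap_sum_sq[OF \<rho>0 V, of t \<xi>] True that[OF \<rho>0 V] show ?thesis by simp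
next
  case False
  have "0 < spectral_gap (gen (evol t H) \<xi>) \<or> 0 < spectral_gap (gen S \<xi>)"
    using False spectral_gap_nonneg[OF hermitian_gen_S[of \<xi>]]
      spectral_gap_nonneg[OF hermitian_gen_evol[of t \<xi>]] by linarith
  then have n: "2 \<le> CARD('n)"
    using spectral_gap_pos_imp_card_ge_2[OF hermitian_gen_S]
      spectral_gap_pos_imp_card_ge_2[OF hermitian_gen_evol] by blast
  obtain V a b where V: "unitary V" and a: "normalized a" and ab: "cinner b a = 0"
    and equal: "\<And>j. cmod (a $ j) = cmod (b $ j)"
    and Ga: "gen (frame t V) \<xi> *v a
       = complex_of_real (lambda_max (gen S \<xi>) + lambda_max (gen (evol t H) \<xi>)) *s a"
    and Gb: "gen (frame t V) \<xi> *v b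
       = complex_of_real (lambda_min (gen S \<xi>) + lambda_min (gen (evol t H) \<xi>)) *s b"
    using exists_frame_extremal_eigvecs[OF n equi, where t = t] by blast
  obtain \<omega> where \<omega>: "cmod \<omega> = 1" and nz: "\<And>j. a $ j \<noteq> 0 \<Longrightarrow> a $ j + \<omega> * b $ j \<noteq> 0"
    using exists_phase_nonvanishing_sum[OF equal] by blast
  define \<psi> where "\<psi> = complex_of_real (1 / sqrt 2) *s (a + \<omega> *s b)"
  have "normalized \<psi>"
    unfolding \<psi>_def using a equal ab \<omega>
    by (intro normalized_superposition) (simp_all add: normalized_def cinner_self)
  note state = fisher_info_pulled_back_pure_state[OF V this, of t \<xi>]
  have "fisher_info (evol t H) Ev (adj (frame t V \<xi>) ** outer \<psi> \<psi> ** frame t V \<xi>) V \<xi>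
      = diag_fisher (gen (frame t V) \<xi>) (outer \<psi> \<psi>)"
    by (rule state(2))
  also have "\<dots> = (lambda_max (gen S \<xi>) + lambda_max (gen (evol t H) \<xi>)
      - (lambda_min (gen S \<xi>) + lambda_min (gen (evol t H) \<xi>)))\<^sup>2"
    unfolding \<psi>_def by (rule diag_fisher_superposition[OF hermitian_gen_frame[OF V] Ga Gb a ab equal \<omega> nz])
  also have "\<dots> = (spectral_gap (gen (evol t H) \<xi>) + spectral_gap (gen S \<xi>))\<^sup>2"
    by (simp add: spectral_gap_def algebra_simps)
  finally show ?thesis using that state(1) V by blast
qed

end

theorem proposition2:
  fixes H :: "real \<Rightarrow> ('n::{finite,linorder}) cmat"
    and E :: "real \<Rightarrow> 'n \<Rightarrow> real"
    and Ev :: "real \<Rightarrow> 'n \<Rightarrow> 'n cvec"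
    and S :: "real \<Rightarrow> 'n cmat"
    and t \<xi> :: real
  assumes herm: "\<And>x. hermitian (H x)"
    and H_diff: "\<And>x. H differentiable (at x)"
    and nondeg: "\<And>x. strict_mono (E x)"
    and eig: "\<And>x j. H x *v Ev x j = complex_of_real (E x j) *s Ev x j"
    and norm: "\<And>x j. normalized (Ev x j)"
    and Ev_diff: "\<And>x j. (\<lambda>y. Ev y j) differentiable (at x)"
    and S_unit: "\<And>x. unitary (S x)"
    and S_eig: "\<And>x j. S x *v Ev x j = axis j 1"
  assumes equi: "\<exists>v1 vd. normalized v1 \<and> normalized vd
       \<and> gen S \<xi> *v v1 = complex_of_real (lambda_max (gen S \<xi>)) *s v1
       \<and> gen S \<xi> *v vd = complex_of_real (lambda_min (gen S \<xi>)) *s vd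
       \<and> (\<forall>j. cmod (v1 $ j) = cmod (vd $ j))"
  shows "is_max_of (fisher_set (evol t H) Ev \<xi>) ((spectral_gap (gen (evol t H) \<xi>) + spectral_gap (gen S \<xi>))\<^sup>2)"
proof -
  interpret smooth_eigenbasis H E Ev S
    using H_diff eig norm Ev_diff S_unit S_eig by unfold_locales
  obtain \<rho>0 V where "density_matrix \<rho>0" "unitary V"
    "fisher_info (evol t H) Ev \<rho>0 V \<xi> = (spectral_gap (gen (evol t H) \<xi>) + spectral_gap (gen S \<xi>))\<^sup>2"
    using gap_sum_sq_attained[OF equi] .
  then have "(spectral_gap (gen (evol t H) \<xi>) + spectral_gap (gen S \<xi>))\<^sup>2 \<in> fisher_set (evol t H) Ev \<xi>"
    unfolding fisher_set_def by force
  moreover have "x \<le> (spectral_gap (gen (evol t H) \<xi>) + spectral_gap (gen S \<xi>))\<^sup>2"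
    if "x \<in> fisher_set (evol t H) Ev \<xi>" for x
    using that fisher_info_le_gap_sum_sq unfolding fisher_set_def by auto
  ultimately show ?thesis by (simp add: is_max_of_def)
qed

end
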